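(* Let $A,B\in\mathbb F^{n\times n}$ with $A$ Lyapunov regular and $B\in\mathcal C_{\mathcal L}(A)\cap\{A\}''_{\mathbb F}$, and let $C_1,\dots,C_m$ be the matrices of a minimal Hill representation of $\mathcal L_{A,B}$ (they lie in $\{A^*\}''_{\mathbb F}$). Assume $\operatorname{span}\{C_1,\dots,C_m,I_n\}=\{A^*\}''_{\mathbb F}$. Then $\ker L_{\mathbf R}\subseteq\ker M_{\mathbf R}$ for every finite collection $\mathbf R\subset\mathbb F^{n\times n}$. In particular this holds when $m=\dim\{A\}''_{\mathbb F}$.
   Context: $\mathbb F=\mathbb R$ or $\mathbb C$; $\otimes$ Kronecker product. $A$ Lyapunov regular: eigenvalues satisfy $\lambda_i+\bar\lambda_j\ne0$. $\mathcal L_Y(X)=XY+Y^*X$, $\mathcal L_{A,B}=\mathcal L_B\circ\mathcal L_A^{-1}$. $\{A\}''_{\mathbb F}$ bicommutant of $A$ in $\mathbb F^{n\times n}$; $\overline{\mathcal H}(A)=\{H\text{ Hermitian}:HA+A^*H\succeq0\}$, $\mathcal C_{\mathcal L}(A)=\{B:\overline{\mathcal H}(A)\subseteq\overline{\mathcal H}(B)\}$. Let $\mathcal L_{A,B}(V)=\sum_{k,l=1}^m\mathbb H_{kl}C_kVC_l^*$ be a minimal Hill representation (smallest possible $m$) with Hill matrix $\mathbb H$; under the hypotheses $\mathbb H$ is positive definite; fix an invertible $P\in\mathbb F^{m\times m}$ with $\mathbb H=P^*P$. Set $\mathbf C=\begin{bmatrix}C_1^*\\\vdots\\C_m^*\end{bmatrix}$,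 $L_R=\begin{bmatrix}R\\(P\otimes R)\mathbf C\end{bmatrix}$, $M_R=\begin{bmatrix}RB\\-(P\otimes RA)\mathbf C\end{bmatrix}$. For a finite collection $\mathbf R=\{R_1,\dots,R_k\}$ set $L_{\mathbf R}=[L_{R_1}\ \cdots\ L_{R_k}]$, $M_{\mathbf R}=[M_{R_1}\ \cdots\ M_{R_k}]$. *)

theory Defs
  imports "Jordan_Normal_Form.Schur_Decomposition" "Jordan_Normal_Form.Char_Poly"
    "Jordan_Normal_Form.Matrix_Kernel"
begin

(* Conjugate transpose A^* is mat_adjoint.  Matrices are n x n JNF matrices over
   'a :: conjugatable_ordered_field (instantiated with real and complex). *)

definition hermitian_mat :: "nat \<Rightarrow> 'a::conjugatable_ordered_field mat \<Rightarrow> bool" where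
  "hermitian_mat n H \<longleftrightarrow> H \<in> carrier_mat n n \<and> mat_adjoint H = H"

definition psd_mat :: "nat \<Rightarrow> 'a::conjugatable_ordered_field mat \<Rightarrow> bool" where
  "psd_mat n H \<longleftrightarrow> hermitian_mat n H \<and> (\<forall>v\<in>carrier_vec n. 0 \<le> (H *\<^sub>v v) \<bullet>c v)"

definition lyap_regular :: "('a::conjugatable_ordered_field \<Rightarrow> complex) \<Rightarrow> nat \<Rightarrow> 'a mat \<Rightarrow> bool" where
  "lyap_regular emb n A \<longleftrightarrow> A \<in> carrier_mat n n \<and>
     (\<forall>la mu. eigenvalue (map_mat emb A) la \<longrightarrow> eigenvalue (map_mat emb A) mu \<longrightarrow> la + cnj mu \<noteq> 0)"

definition lyap_op :: "'a::conjugatable_ordered_field mat \<Rightarrow> 'a mat \<Rightarrow> 'a mat" where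
  "lyap_op Y X = X * Y + mat_adjoint Y * X"

definition lyap_inv :: "nat \<Rightarrow> 'a::conjugatable_ordered_field mat \<Rightarrow> 'a mat \<Rightarrow> 'a mat" where
  "lyap_inv n A V = (THE X. X \<in> carrier_mat n n \<and> lyap_op A X = V)"

definition lyap_AB :: "nat \<Rightarrow> 'a::conjugatable_ordered_field mat \<Rightarrow> 'a mat \<Rightarrow> 'a mat \<Rightarrow> 'a mat" where
  "lyap_AB n A B V = lyap_op B (lyap_inv n A V)"

definition HH :: "nat \<Rightarrow> 'a::conjugatable_ordered_field mat \<Rightarrow> 'a mat set" where
  "HH n A = {H. hermitian_mat n H \<and> psd_mat n (H * A + mat_adjoint A * H)}"

definition CL :: "nat \<Rightarrow> 'a::conjugatable_ordered_field mat \<Rightarrow> 'a mat set" where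
  "CL n A = {B. B \<in> carrier_mat n n \<and> HH n A \<subseteq> HH n B}"

definition commutant :: "nat \<Rightarrow> 'a::conjugatable_ordered_field mat set \<Rightarrow> 'a mat set" where
  "commutant n S = {X. X \<in> carrier_mat n n \<and> (\<forall>Y\<in>S. X * Y = Y * X)}"

definition bicomm :: "nat \<Rightarrow> 'a::conjugatable_ordered_field mat \<Rightarrow> 'a mat set" where
  "bicomm n A = commutant n (commutant n {A})"

definition hill_sum :: "nat \<Rightarrow> nat \<Rightarrow> (nat \<Rightarrow> 'a::conjugatable_ordered_field mat) \<Rightarrow> 'a mat \<Rightarrow> 'a mat \<Rightarrow> 'a mat" where
  "hill_sum n m C H V = mat n n (\<lambda>(i,j). \<Sum>k<m. \<Sum>l<m. H $$ (k,l) * (C k * V * mat_adjoint (C l)) $$ (i,j))"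

definition hill_rep :: "nat \<Rightarrow> ('a::conjugatable_ordered_field mat \<Rightarrow> 'a mat) \<Rightarrow> nat \<Rightarrow> (nat \<Rightarrow> 'a mat) \<Rightarrow> 'a mat \<Rightarrow> bool" where
  "hill_rep n \<Phi> m C H \<longleftrightarrow> H \<in> carrier_mat m m \<and> (\<forall>k<m. C k \<in> carrier_mat n n) \<and>
     (\<forall>V\<in>carrier_mat n n. \<Phi> V = hill_sum n m C H V)"

definition min_hill_rep :: "nat \<Rightarrow> ('a::conjugatable_ordered_field mat \<Rightarrow> 'a mat) \<Rightarrow> nat \<Rightarrow> (nat \<Rightarrow> 'a mat) \<Rightarrow> 'a mat \<Rightarrow> bool" where
  "min_hill_rep n \<Phi> m C H \<longleftrightarrow> hill_rep n \<Phi> m C H \<and>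
     (\<forall>m' (C' :: nat \<Rightarrow> 'a mat) H'. hill_rep n \<Phi> m' C' H' \<longrightarrow> m \<le> m')"

definition mat_lin_span :: "nat \<Rightarrow> nat \<Rightarrow> (nat \<Rightarrow> 'a::conjugatable_ordered_field mat) \<Rightarrow> 'a mat set" where
  "mat_lin_span n d D = {mat n n (\<lambda>(i,j). \<Sum>k<d. c k * D k $$ (i,j)) | c. True}"

definition span_C_I :: "nat \<Rightarrow> nat \<Rightarrow> (nat \<Rightarrow> 'a::conjugatable_ordered_field mat) \<Rightarrow> 'a mat set" where
  "span_C_I n m C = mat_lin_span n (Suc m) (\<lambda>k. if k < m then C k else 1\<^sub>m n)"

definition mat_subspace_dim :: "nat \<Rightarrow> 'a::conjugatable_ordered_field mat set \<Rightarrow> nat" where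
  "mat_subspace_dim n S = (LEAST d. \<exists>D. (\<forall>k<d. D k \<in> S) \<and> S \<subseteq> mat_lin_span n d D)"

definition kron :: "nat \<Rightarrow> nat \<Rightarrow> 'a::conjugatable_ordered_field mat \<Rightarrow> 'a mat \<Rightarrow> 'a mat" where
  "kron m n P R = mat (m*n) (m*n) (\<lambda>(i,j). P $$ (i div n, j div n) * R $$ (i mod n, j mod n))"

(* bold C = [C_1^*; ...; C_m^*] of size mn x n *)
definition stackC :: "nat \<Rightarrow> nat \<Rightarrow> (nat \<Rightarrow> 'a::conjugatable_ordered_field mat) \<Rightarrow> 'a mat" where
  "stackC n m C = mat (m*n) n (\<lambda>(i,j). mat_adjoint (C (i div n)) $$ (i mod n, j))"

definition vstack :: "'a mat \<Rightarrow> 'a mat \<Rightarrow> 'a mat" where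
  "vstack X Y = mat (dim_row X + dim_row Y) (dim_col X)
     (\<lambda>(i,j). if i < dim_row X then X $$ (i,j) else Y $$ (i - dim_row X, j))"

definition L_R :: "nat \<Rightarrow> nat \<Rightarrow> (nat \<Rightarrow> 'a::conjugatable_ordered_field mat) \<Rightarrow> 'a mat \<Rightarrow> 'a mat \<Rightarrow> 'a mat" where
  "L_R n m C P R = vstack R (kron m n P R * stackC n m C)"

definition M_R :: "nat \<Rightarrow> nat \<Rightarrow> (nat \<Rightarrow> 'a::conjugatable_ordered_field mat) \<Rightarrow> 'a mat \<Rightarrow> 'a mat \<Rightarrow> 'a mat \<Rightarrow> 'a mat \<Rightarrow> 'a mat" where
  "M_R n m C P A B R = vstack (R * B) (- (kron m n P (R * A) * stackC n m C))"

definition hcat :: "nat \<Rightarrow> nat \<Rightarrow> 'a mat list \<Rightarrow> 'a mat" where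
  "hcat r n Xs = mat r (length Xs * n) (\<lambda>(i,j). (Xs ! (j div n)) $$ (i, j mod n))"

definition L_Rs :: "nat \<Rightarrow> nat \<Rightarrow> (nat \<Rightarrow> 'a::conjugatable_ordered_field mat) \<Rightarrow> 'a mat \<Rightarrow> 'a mat list \<Rightarrow> 'a mat" where
  "L_Rs n m C P Rs = hcat (n + m*n) n (map (L_R n m C P) Rs)"

definition M_Rs :: "nat \<Rightarrow> nat \<Rightarrow> (nat \<Rightarrow> 'a::conjugatable_ordered_field mat) \<Rightarrow> 'a mat \<Rightarrow> 'a mat \<Rightarrow> 'a mat \<Rightarrow> 'a mat list \<Rightarrow> 'a mat" where
  "M_Rs n m C P A B Rs = hcat (n + m*n) n (map (M_R n m C P A B) Rs)"

end

theory Submission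
  imports Defs
begin

text \<open>
  Split \<open>x\<close> into blocks \<open>x\<^sub>1, \<dots>, x\<^sub>k\<close> matching \<open>R\<^sub>1, \<dots>, R\<^sub>k\<close>. The condition
  \<open>\<Sum>\<^sub>i R\<^sub>i Y x\<^sub>i = 0\<close> is linear in the matrix \<open>Y\<close>. The block rows of \<open>L\<^sub>R x = 0\<close> say that it
  holds for \<open>Y = I\<close> and, \<open>P\<close> being invertible, for \<open>Y = C\<^sub>l\<^sup>*\<close>; those of \<open>M\<^sub>R x = 0\<close> ask for it at
  \<open>Y = B\<close> and \<open>Y = A C\<^sub>l\<^sup>*\<close>. So it suffices that \<open>B\<^sup>*\<close> and \<open>C\<^sub>l A\<^sup>*\<close> lie in
  \<open>span {C\<^sub>1, \<dots>, C\<^sub>m, I}\<close>. If the \<open>C\<^sub>l\<close> lie in \<open>{A\<^sup>*}''\<close>, then so do \<open>B\<^sup>*\<close> and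
  \<open>C\<^sub>l A\<^sup>*\<close>, and it is enough that the span contains \<open>{A\<^sup>*}''\<close>.

  These conditions hold trivially if the span equals \<open>{A\<^sup>*}''\<close>. If \<open>m = dim {A}''\<close>: Lyapunov
  regularity makes \<open>L\<^sub>A\<close> invertible, so \<open>L\<^sub>A\<^sub>,\<^sub>B\<close> commutes with left multiplication by the commutant of
  \<open>A\<^sup>*\<close>; as the Hill matrix \<open>P\<^sup>* P\<close> is invertible and the \<open>C\<^sub>l\<close> are independent by
  minimality, this forces \<open>C\<^sub>l \<in> {A\<^sup>*}''\<close>. Then \<open>m\<close> independent elements of
  \<open>{A\<^sup>*}'' = {A}''\<^sup>*\<close>, a space of dimension \<open>m\<close>, span it.
\<close>

section \<open>Conjugate transposes\<close>

lemma mat_adjoint_eq: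
  "mat_adjoint (A :: 'a :: conjugatable_field mat) =
     mat (dim_col A) (dim_row A) (\<lambda>(i,j). conjugate (A $$ (j,i)))"
  unfolding mat_adjoint_def by (rule eq_matI) (auto simp: mat_of_rows_def)

lemma mat_adjoint_dim [simp]:
  "dim_row (mat_adjoint A) = dim_col A" "dim_col (mat_adjoint A) = dim_row A"
  by (simp_all add: mat_adjoint_eq)

lemma index_mat_adjoint [simp]:
  "i < dim_col A \<Longrightarrow> j < dim_row A \<Longrightarrow> mat_adjoint A $$ (i,j) = conjugate (A $$ (j,i))"
  by (simp add: mat_adjoint_eq)

lemma mat_adjoint_carrier_mat_iff [simp]: "mat_adjoint A \<in> carrier_mat m n \<longleftrightarrow> A \<in> carrier_mat n m"
  unfolding carrier_mat_def by auto

lemma mat_adjoint_carrier_mat: "A \<in> carrier_mat n m \<Longrightarrow> mat_adjoint A \<in> carrier_mat m n"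
  by simp

lemma mat_adjoint_adjoint [simp]: "mat_adjoint (mat_adjoint A) = A"
  by (rule eq_matI) simp_all

lemma mat_adjoint_mult:
  assumes "A \<in> carrier_mat n k" "B \<in> carrier_mat k m"
  shows "mat_adjoint (A * B) = mat_adjoint B * mat_adjoint A"
  using assms
  by (intro eq_matI) (simp_all add: scalar_prod_def sum_conjugate conjugate_dist_mul mult.commute)

lemma conjugate_one [simp]: "conjugate (1 :: 'a :: conjugatable_field) = 1"
  using conjugate_dist_mul[of "1::'a" 1] conjugate_zero_iff[of "1::'a"]
  by (metis mult_cancel_right1 one_neq_zero)

lemma mat_adjoint_one [simp]: "mat_adjoint (1\<^sub>m n :: 'a :: conjugatable_field mat) = 1\<^sub>m n"
  by (rule eq_matI) simp_all

section \<open>Block matrices\<close>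

lemma eq_carrier_matI:
  assumes "A \<in> carrier_mat nr nc" and "B \<in> carrier_mat nr nc"
    and "\<And>i j. i < nr \<Longrightarrow> j < nc \<Longrightarrow> A $$ (i,j) = B $$ (i,j)"
  shows "A = B"
  using assms by (intro eq_matI) auto

lemma sum_lessThan_mult: "(\<Sum>j<k*n. f j) = (\<Sum>i<k. \<Sum>s<n. f (i*n + s))" for k n :: nat
  by (simp add: sum.nat_group[symmetric] sum.atLeastLessThan_shift_0 atLeast0LessThan add.commute)

lemma block_index_less:
  assumes "p < m" and "r < n"
  shows "p*n + r < m*(n::nat)"
proof -
  have "(p + 1) * n \<le> m * n" using assms(1) by (intro mult_le_mono1) simp
  then have "p*n + n \<le> m*n" by (simp only: distrib_right mult_1)
  then show ?thesis using assms(2) by linarith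
qed

lemma index_mult_mat_vec_sum:
  "A \<in> carrier_mat r c \<Longrightarrow> v \<in> carrier_vec c \<Longrightarrow> q < r \<Longrightarrow> (A *\<^sub>v v) $ q = (\<Sum>j<c. A $$ (q,j) * v $ j)"
  by (simp add: scalar_prod_def lessThan_atLeast0)

lemma sum_lessThan_single:
  fixes f :: "nat \<Rightarrow> 'a :: comm_monoid_add"
  assumes "j < n" and "\<And>k. k < n \<Longrightarrow> k \<noteq> j \<Longrightarrow> f k = 0"
  shows "(\<Sum>k<n. f k) = f j"
  using assms by (subst sum.mono_neutral_cong_right[of _ "{j}"]) auto

definition block_vec :: "nat \<Rightarrow> 'a vec \<Rightarrow> nat \<Rightarrow> 'a vec" where
  "block_vec n x i = vec n (\<lambda>s. x $ (i*n + s))"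

lemma block_vec_carrier [simp]: "block_vec n x i \<in> carrier_vec n"
  by (simp add: block_vec_def)

lemma hcat_carrier_mat: "hcat r n Xs \<in> carrier_mat r (length Xs * n)"
  by (simp add: hcat_def)

lemma hcat_mult_vec_index:
  assumes n: "n > 0" and Xs: "set Xs \<subseteq> carrier_mat r n" and x: "x \<in> carrier_vec (length Xs * n)"
    and q: "q < r"
  shows "(hcat r n Xs *\<^sub>v x) $ q = (\<Sum>i<length Xs. (Xs ! i *\<^sub>v block_vec n x i) $ q)"
proof -
  have "(hcat r n Xs *\<^sub>v x) $ q = (\<Sum>i<length Xs. \<Sum>s<n. hcat r n Xs $$ (q, i*n+s) * x $ (i*n+s))"
    using index_mult_mat_vec_sum[OF hcat_carrier_mat x q] sum_lessThan_mult by simp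
  also have "\<dots> = (\<Sum>i<length Xs. (Xs ! i *\<^sub>v block_vec n x i) $ q)"
  proof (rule sum.cong[OF refl])
    fix i assume i: "i \<in> {..<length Xs}"
    then have "Xs ! i \<in> carrier_mat r n" using Xs by auto
    have "(\<Sum>s<n. hcat r n Xs $$ (q, i*n+s) * x $ (i*n+s)) =
        (\<Sum>s<n. Xs ! i $$ (q,s) * block_vec n x i $ s)"
    proof (rule sum.cong[OF refl])
      fix s assume "s \<in> {..<n}"
      moreover have "i*n + s < length Xs * n" using i \<open>s \<in> {..<n}\<close> by (simp add: block_index_less)
      ultimately show "hcat r n Xs $$ (q, i*n+s) * x $ (i*n+s) =
          Xs ! i $$ (q,s) * block_vec n x i $ s"
        using q n by (simp add: hcat_def block_vec_def)
    qed
    then show "(\<Sum>s<n. hcat r n Xs $$ (q, i*n+s) * x $ (i*n+s)) = (Xs ! i *\<^sub>v block_vec n x i) $ q"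
      using index_mult_mat_vec_sum[OF \<open>Xs ! i \<in> carrier_mat r n\<close> block_vec_carrier q] by simp
  qed
  finally show ?thesis .
qed

lemma mat_kernel_hcat_iff:
  assumes "n > 0" and "set Xs \<subseteq> carrier_mat r n"
  shows "x \<in> mat_kernel (hcat r n Xs) \<longleftrightarrow>
    x \<in> carrier_vec (length Xs * n) \<and> (\<forall>q<r. (\<Sum>i<length Xs. (Xs ! i *\<^sub>v block_vec n x i) $ q) = 0)"
proof -
  have "hcat r n Xs *\<^sub>v x = 0\<^sub>v r \<longleftrightarrow> (\<forall>q<r. (hcat r n Xs *\<^sub>v x) $ q = 0)"
    using hcat_carrier_mat[of r n Xs]
    by (metis dim_mult_mat_vec carrier_matD(1) eq_vecI index_zero_vec)
  moreover have "(hcat r n Xs *\<^sub>v x) $ q = (\<Sum>i<length Xs. (Xs ! i *\<^sub>v block_vec n x i) $ q)"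
    if "x \<in> carrier_vec (length Xs * n)" "q < r" for q
    using hcat_mult_vec_index[OF assms that] .
  ultimately show ?thesis by (auto simp: mat_kernel[OF hcat_carrier_mat])
qed

lemma vstack_carrier_mat:
  "X \<in> carrier_mat r1 c \<Longrightarrow> Y \<in> carrier_mat r2 c \<Longrightarrow> vstack X Y \<in> carrier_mat (r1 + r2) c"
  by (simp add: vstack_def)

lemma vstack_mult_vec_index:
  assumes X: "X \<in> carrier_mat r1 c" and Y: "Y \<in> carrier_mat r2 c" and v: "v \<in> carrier_vec c"
    and q: "q < r1 + r2"
  shows "(vstack X Y *\<^sub>v v) $ q = (if q < r1 then (X *\<^sub>v v) $ q else (Y *\<^sub>v v) $ (q - r1))"
  using assms index_mult_mat_vec_sum[OF vstack_carrier_mat[OF X Y] v q]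
    index_mult_mat_vec_sum[OF X v, of q] index_mult_mat_vec_sum[OF Y v, of "q - r1"]
  by (auto simp: vstack_def intro!: sum.cong)

lemma kron_carrier_mat: "kron m n P R \<in> carrier_mat (m*n) (m*n)"
  by (simp add: kron_def)

lemma stackC_carrier_mat: "stackC n m C \<in> carrier_mat (m*n) n"
  by (simp add: stackC_def)

lemma kron_stackC_carrier_mat: "kron m n P R * stackC n m C \<in> carrier_mat (m*n) n"
  using kron_carrier_mat stackC_carrier_mat by (rule mult_carrier_mat)

lemma index_kron_stackC:
  assumes R: "R \<in> carrier_mat n n" and C: "\<forall>l<m. C l \<in> carrier_mat n n"
    and p: "p < m" and r: "r < n" and j: "j < n"
  shows "(kron m n P R * stackC n m C) $$ (p*n + r, j) =
    (\<Sum>l<m. P $$ (p,l) * (R * mat_adjoint (C l)) $$ (r,j))"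
proof -
  have q: "p*n + r < m*n" using p r by (rule block_index_less)
  have "(kron m n P R * stackC n m C) $$ (p*n + r, j) =
      (\<Sum>k<m*n. kron m n P R $$ (p*n+r, k) * stackC n m C $$ (k, j))"
    using q j by (simp add: kron_def stackC_def scalar_prod_def lessThan_atLeast0)
  also have "\<dots> = (\<Sum>l<m. \<Sum>s<n. kron m n P R $$ (p*n+r, l*n+s) * stackC n m C $$ (l*n+s, j))"
    by (rule sum_lessThan_mult)
  also have "\<dots> = (\<Sum>l<m. P $$ (p,l) * (R * mat_adjoint (C l)) $$ (r,j))"
  proof (rule sum.cong[OF refl])
    fix l assume l: "l \<in> {..<m}"
    then have Cl: "C l \<in> carrier_mat n n" using C by auto
    have "P $$ (p,l) * (R * mat_adjoint (C l)) $$ (r,j) =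
        (\<Sum>s<n. P $$ (p,l) * R $$ (r,s) * mat_adjoint (C l) $$ (s,j))"
      using R Cl r j by (simp add: scalar_prod_def lessThan_atLeast0 sum_distrib_left mult.assoc)
    also have "\<dots> = (\<Sum>s<n. kron m n P R $$ (p*n+r, l*n+s) * stackC n m C $$ (l*n+s, j))"
      using q l j r Cl block_index_less[of l m _ n]
      by (intro sum.cong refl) (simp add: kron_def stackC_def)
    finally show "(\<Sum>s<n. kron m n P R $$ (p*n+r, l*n+s) * stackC n m C $$ (l*n+s, j)) =
        P $$ (p,l) * (R * mat_adjoint (C l)) $$ (r,j)" by simp
  qed
  finally show ?thesis .
qed

lemma kron_stackC_mult_vec_index:
  assumes R: "R \<in> carrier_mat n n" and C: "\<forall>l<m. C l \<in> carrier_mat n n"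
    and p: "p < m" and r: "r < n" and v: "v \<in> carrier_vec n"
  shows "((kron m n P R * stackC n m C) *\<^sub>v v) $ (p*n + r) =
    (\<Sum>l<m. P $$ (p,l) * ((R * mat_adjoint (C l)) *\<^sub>v v) $ r)"
proof -
  have "((kron m n P R * stackC n m C) *\<^sub>v v) $ (p*n + r) =
      (\<Sum>j<n. (kron m n P R * stackC n m C) $$ (p*n + r, j) * v $ j)"
    by (rule index_mult_mat_vec_sum[OF kron_stackC_carrier_mat v block_index_less[OF p r]])
  also have "\<dots> = (\<Sum>j<n. \<Sum>l<m. P $$ (p,l) * (R * mat_adjoint (C l)) $$ (r,j) * v $ j)"
    using index_kron_stackC[OF R C p r] by (simp add: sum_distrib_right)
  also have "\<dots> = (\<Sum>l<m. P $$ (p,l) * (\<Sum>j<n. (R * mat_adjoint (C l)) $$ (r,j) * v $ j))"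
    by (subst sum.swap) (simp add: sum_distrib_left mult.assoc)
  also have "\<dots> = (\<Sum>l<m. P $$ (p,l) * ((R * mat_adjoint (C l)) *\<^sub>v v) $ r)"
  proof (rule sum.cong[OF refl])
    fix l assume "l \<in> {..<m}"
    then have "R * mat_adjoint (C l) \<in> carrier_mat n n" using R C by auto
    from index_mult_mat_vec_sum[OF this v r]
    show "P $$ (p,l) * (\<Sum>j<n. (R * mat_adjoint (C l)) $$ (r,j) * v $ j) =
        P $$ (p,l) * ((R * mat_adjoint (C l)) *\<^sub>v v) $ r" by simp
  qed
  finally show ?thesis .
qed

lemma L_R_carrier_mat: "R \<in> carrier_mat n n \<Longrightarrow> L_R n m C P R \<in> carrier_mat (n + m*n) n"
  unfolding L_R_def by (intro vstack_carrier_mat kron_stackC_carrier_mat)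

lemma M_R_carrier_mat:
  "R \<in> carrier_mat n n \<Longrightarrow> B \<in> carrier_mat n n \<Longrightarrow> M_R n m C P A B R \<in> carrier_mat (n + m*n) n"
  unfolding M_R_def by (intro vstack_carrier_mat mult_carrier_mat uminus_carrier_mat
    kron_stackC_carrier_mat)

lemma L_R_mult_vec_index:
  assumes R: "R \<in> carrier_mat n n" and C: "\<forall>l<m. C l \<in> carrier_mat n n" and v: "v \<in> carrier_vec n"
  shows "q < n \<Longrightarrow> (L_R n m C P R *\<^sub>v v) $ q = (R *\<^sub>v v) $ q"
    and "p < m \<Longrightarrow> r < n \<Longrightarrow> (L_R n m C P R *\<^sub>v v) $ (n + (p*n + r)) =
      (\<Sum>l<m. P $$ (p,l) * ((R * mat_adjoint (C l)) *\<^sub>v v) $ r)"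
proof -
  note rows = vstack_mult_vec_index[OF R kron_stackC_carrier_mat[of m n P R C] v]
  show "q < n \<Longrightarrow> (L_R n m C P R *\<^sub>v v) $ q = (R *\<^sub>v v) $ q"
    using rows[of q] by (simp add: L_R_def)
  show "(L_R n m C P R *\<^sub>v v) $ (n + (p*n + r)) =
      (\<Sum>l<m. P $$ (p,l) * ((R * mat_adjoint (C l)) *\<^sub>v v) $ r)" if "p < m" "r < n"
    using rows[of "n + (p*n + r)"] block_index_less[OF that]
      kron_stackC_mult_vec_index[OF R C that v]
    by (simp add: L_R_def)
qed

lemma M_R_mult_vec_index:
  assumes R: "R \<in> carrier_mat n n" and A: "A \<in> carrier_mat n n" and B: "B \<in> carrier_mat n n"
    and C: "\<forall>l<m. C l \<in> carrier_mat n n" and v: "v \<in> carrier_vec n"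
  shows "q < n \<Longrightarrow> (M_R n m C P A B R *\<^sub>v v) $ q = ((R * B) *\<^sub>v v) $ q"
    and "p < m \<Longrightarrow> r < n \<Longrightarrow> (M_R n m C P A B R *\<^sub>v v) $ (n + (p*n + r)) =
      - (\<Sum>l<m. P $$ (p,l) * ((R * (A * mat_adjoint (C l))) *\<^sub>v v) $ r)"
proof -
  have RB: "R * B \<in> carrier_mat n n" and RA: "R * A \<in> carrier_mat n n" using R A B by auto
  note K = uminus_carrier_mat[OF kron_stackC_carrier_mat[of m n P "R * A" C]]
  show "q < n \<Longrightarrow> (M_R n m C P A B R *\<^sub>v v) $ q = ((R * B) *\<^sub>v v) $ q"
    using vstack_mult_vec_index[OF RB K v, of q] by (simp add: M_R_def)
  assume p: "p < m" and r: "r < n"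
  have "(M_R n m C P A B R *\<^sub>v v) $ (n + (p*n + r)) =
      (- (kron m n P (R * A) * stackC n m C) *\<^sub>v v) $ (p*n + r)"
    using vstack_mult_vec_index[OF RB K v, of "n + (p*n + r)"] block_index_less[OF p r]
    by (simp add: M_R_def)
  also have "\<dots> = - ((kron m n P (R * A) * stackC n m C *\<^sub>v v) $ (p*n + r))"
    using kron_stackC_carrier_mat[of m n P "R * A" C] v block_index_less[OF p r]
    by (subst uminus_mult_mat_vec) auto
  also have "\<dots> = - (\<Sum>l<m. P $$ (p,l) * ((R * A * mat_adjoint (C l)) *\<^sub>v v) $ r)"
    using kron_stackC_mult_vec_index[OF RA C p r v] by simp
  also have "\<dots> = - (\<Sum>l<m. P $$ (p,l) * ((R * (A * mat_adjoint (C l))) *\<^sub>v v) $ r)"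
    using R A C
    by (intro arg_cong[of _ _ uminus] sum.cong refl) (simp add: assoc_mult_mat[of _ n n _ n _ n])
  finally show "(M_R n m C P A B R *\<^sub>v v) $ (n + (p*n + r)) =
      - (\<Sum>l<m. P $$ (p,l) * ((R * (A * mat_adjoint (C l))) *\<^sub>v v) $ r)" .
qed

section \<open>Linear combinations of matrices\<close>

definition mat_lincomb :: "nat \<Rightarrow> nat \<Rightarrow> (nat \<Rightarrow> 'a :: comm_ring_1) \<Rightarrow> (nat \<Rightarrow> 'a mat) \<Rightarrow> 'a mat" where
  "mat_lincomb n d c D = mat n n (\<lambda>(a,b). \<Sum>j<d. c j * D j $$ (a,b))"

lemma mat_lincomb_carrier_mat [simp]: "mat_lincomb n d c D \<in> carrier_mat n n"
  by (simp add: mat_lincomb_def)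

lemma mat_lin_span_eq: "mat_lin_span n d D = range (\<lambda>c. mat_lincomb n d c D)"
  by (auto simp: mat_lin_span_def mat_lincomb_def)

lemma mult_mat_lincomb:
  assumes R: "R \<in> carrier_mat n n" and D: "\<forall>j<d. D j \<in> carrier_mat n n"
  shows "R * mat_lincomb n d c D = mat_lincomb n d c (\<lambda>j. R * D j)"
proof (rule eq_carrier_matI)
  fix a b assume a: "a < n" and b: "b < n"
  have "(R * mat_lincomb n d c D) $$ (a,b) = (\<Sum>k<n. \<Sum>j<d. c j * (R $$ (a,k) * D j $$ (k,b)))"
    using R a b
    by (simp add: mat_lincomb_def scalar_prod_def lessThan_atLeast0 sum_distrib_left mult_ac)
  also have "\<dots> = (\<Sum>j<d. c j * (R * D j) $$ (a,b))"
    using R D a b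
    by (subst sum.swap)
      (auto simp: scalar_prod_def lessThan_atLeast0 sum_distrib_left intro!: sum.cong)
  finally show "(R * mat_lincomb n d c D) $$ (a,b) = mat_lincomb n d c (\<lambda>j. R * D j) $$ (a,b)"
    using a b by (simp add: mat_lincomb_def)
qed (use R in auto)

lemma mat_lincomb_mult:
  assumes D: "\<forall>j<d. D j \<in> carrier_mat n n" and R: "R \<in> carrier_mat n n"
  shows "mat_lincomb n d c D * R = mat_lincomb n d c (\<lambda>j. D j * R)"
proof (rule eq_carrier_matI)
  fix a b assume a: "a < n" and b: "b < n"
  have "(mat_lincomb n d c D * R) $$ (a,b) = (\<Sum>k<n. \<Sum>j<d. c j * (D j $$ (a,k) * R $$ (k,b)))"
    using R a b
    by (simp add: mat_lincomb_def scalar_prod_def lessThan_atLeast0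
        sum_distrib_left sum_distrib_right mult_ac)
  also have "\<dots> = (\<Sum>j<d. c j * (D j * R) $$ (a,b))"
    using R D a b
    by (subst sum.swap)
      (auto simp: scalar_prod_def lessThan_atLeast0 sum_distrib_left intro!: sum.cong)
  finally show "(mat_lincomb n d c D * R) $$ (a,b) = mat_lincomb n d c (\<lambda>j. D j * R) $$ (a,b)"
    using a b by (simp add: mat_lincomb_def)
qed (use R mult_carrier_mat[OF mat_lincomb_carrier_mat R] in auto)

lemma mat_lincomb_add:
  assumes D: "\<forall>j<d. D j \<in> carrier_mat n n" and E: "\<forall>j<d. E j \<in> carrier_mat n n"
  shows "mat_lincomb n d c D + mat_lincomb n d c E = mat_lincomb n d c (\<lambda>j. D j + E j)"
proof (rule eq_carrier_matI)
  fix a b assume a: "a < n" and b: "b < n"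
  have "(\<Sum>j<d. c j * (D j + E j) $$ (a,b)) = (\<Sum>j<d. c j * D j $$ (a,b) + c j * E j $$ (a,b))"
    using D E a b by (intro sum.cong refl) (auto simp: distrib_left)
  then show "(mat_lincomb n d c D + mat_lincomb n d c E) $$ (a,b) =
      mat_lincomb n d c (\<lambda>j. D j + E j) $$ (a,b)"
    using a b by (simp add: mat_lincomb_def sum.distrib)
qed auto

lemma mat_lincomb_mult_vec_index:
  assumes F: "\<forall>j<d. F j \<in> carrier_mat n n" and v: "v \<in> carrier_vec n" and r: "r < n"
  shows "(mat_lincomb n d c F *\<^sub>v v) $ r = (\<Sum>j<d. c j * (F j *\<^sub>v v) $ r)"
proof -
  have "(mat_lincomb n d c F *\<^sub>v v) $ r = (\<Sum>k<n. mat_lincomb n d c F $$ (r,k) * v $ k)"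
    by (rule index_mult_mat_vec_sum[OF mat_lincomb_carrier_mat v r])
  also have "\<dots> = (\<Sum>k<n. \<Sum>j<d. c j * (F j $$ (r,k) * v $ k))"
    using r by (simp add: mat_lincomb_def sum_distrib_left mult_ac)
  also have "\<dots> = (\<Sum>j<d. c j * (F j *\<^sub>v v) $ r)"
    using F v r
    by (subst sum.swap)
      (auto simp: index_mult_mat_vec_sum[of _ n n] sum_distrib_left intro!: sum.cong)
  finally show ?thesis .
qed

lemma mat_adjoint_lincomb:
  assumes "\<forall>j<d. D j \<in> carrier_mat n n"
  shows "mat_adjoint (mat_lincomb n d c D) = mat_lincomb n d (\<lambda>j. conjugate (c j)) (\<lambda>j.
      mat_adjoint (D j))"
  using assms
  by (intro eq_matI) (auto simp: mat_lincomb_def sum_conjugate conjugate_dist_mul intro!: sum.cong)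

lemma mat_adjoint_mat_lin_span:
  assumes D: "\<forall>k<d. D k \<in> carrier_mat n n" and Y: "mat_adjoint Y \<in> mat_lin_span n d D"
  shows "Y \<in> mat_lin_span n d (\<lambda>k. mat_adjoint (D k))"
proof -
  obtain c where "mat_adjoint Y = mat_lincomb n d c D" using Y unfolding mat_lin_span_eq by blast
  then have "Y = mat_lincomb n d (\<lambda>k. conjugate (c k)) (\<lambda>k. mat_adjoint (D k))"
    using mat_adjoint_lincomb[OF D] by (metis mat_adjoint_adjoint)
  then show ?thesis unfolding mat_lin_span_eq by blast
qed

definition mat_lin_indep :: "nat \<Rightarrow> nat \<Rightarrow> (nat \<Rightarrow> 'a :: comm_ring_1 mat) \<Rightarrow> bool" where
  "mat_lin_indep n d F \<longleftrightarrow> (\<forall>c. mat_lincomb n d c F = 0\<^sub>m n n \<longrightarrow> (\<forall>k<d. c k = 0))"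

lemma mat_lin_indepD:
  "mat_lin_indep n d F \<Longrightarrow> mat_lincomb n d c F = 0\<^sub>m n n \<Longrightarrow> k < d \<Longrightarrow> c k = 0"
  by (simp add: mat_lin_indep_def)

lemma mat_lincomb_eq_0_iff:
  "mat_lincomb n d c F = 0\<^sub>m n n \<longleftrightarrow> (\<forall>a<n. \<forall>b<n. (\<Sum>k<d. c k * F k $$ (a,b)) = 0)"
proof
  assume "mat_lincomb n d c F = 0\<^sub>m n n"
  then have "mat_lincomb n d c F $$ (a,b) = 0" if "a < n" "b < n" for a b
    using that by simp
  then show "\<forall>a<n. \<forall>b<n. (\<Sum>k<d. c k * F k $$ (a,b)) = 0" by (simp add: mat_lincomb_def)
qed (auto simp: mat_lincomb_def intro!: eq_matI)

lemma span_C_I_generator: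
  assumes "l < m" and "C l \<in> carrier_mat n n"
  shows "C l \<in> span_C_I n m C"
proof -
  let ?D = "\<lambda>k. if k < m then C k else 1\<^sub>m n"
  have "mat_lincomb n (Suc m) (\<lambda>k. if k = l then 1 else 0) ?D = C l"
  proof (rule eq_matI)
    fix a b assume "a < dim_row (C l)" "b < dim_col (C l)"
    then have "a < n" "b < n" using assms(2) by auto
    moreover have "(\<Sum>k<Suc m. (if k = l then 1 else 0) * ?D k $$ (a,b)) = ?D l $$ (a,b)"
      using assms(1) by (subst sum.mono_neutral_cong_right[of _ "{l}"]) auto
    ultimately show "mat_lincomb n (Suc m) (\<lambda>k. if k = l then 1 else 0) ?D $$ (a,b) = C l $$ (a,b)"
      using assms(1) by (simp add: mat_lincomb_def)
  qed (use assms(2) in \<open>simp_all add: mat_lincomb_def\<close>)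
  then show ?thesis unfolding span_C_I_def mat_lin_span_eq by (intro range_eqI) (rule sym)
qed

lemma mat_lin_span_subset_span_C_I:
  assumes "\<forall>k<m. C k \<in> carrier_mat n n"
  shows "mat_lin_span n m C \<subseteq> span_C_I n m C"
proof
  fix Y assume "Y \<in> mat_lin_span n m C"
  then obtain c where Y: "Y = mat_lincomb n m c C" by (auto simp: mat_lin_span_eq)
  have "Y = mat_lincomb n (Suc m) (c(m := 0)) (\<lambda>k. if k < m then C k else 1\<^sub>m n)"
    unfolding Y by (intro eq_matI) (auto simp: mat_lincomb_def intro!: sum.cong)
  then show "Y \<in> span_C_I n m C" unfolding span_C_I_def mat_lin_span_eq by blast
qed

section \<open>The kernels of \<open>L\<^sub>R\<close> and \<open>M\<^sub>R\<close>\<close>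

lemma mat_kernel_hcat_mat_lincomb:
  assumes n: "n > 0" and Rs: "set Rs \<subseteq> carrier_mat n n" and D: "\<forall>j<d. D j \<in> carrier_mat n n"
    and x: "x \<in> carrier_vec (length Rs * n)"
    and ker: "\<forall>j<d. x \<in> mat_kernel (hcat n n (map (\<lambda>R. R * D j) Rs))"
  shows "x \<in> mat_kernel (hcat n n (map (\<lambda>R. R * mat_lincomb n d c D) Rs))"
proof -
  have blocks: "set (map (\<lambda>R. R * Y) Rs) \<subseteq> carrier_mat n n" if "Y \<in> carrier_mat n n" for Y
    using Rs that by auto
  have "(\<Sum>i<length Rs. ((Rs ! i * mat_lincomb n d c D) *\<^sub>v block_vec n x i) $ q) = 0"
    if q: "q < n" for q
  proof -
    have "(\<Sum>i<length Rs. ((Rs ! i * mat_lincomb n d c D) *\<^sub>v block_vec n x i) $ q) =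
        (\<Sum>i<length Rs. \<Sum>j<d. c j * ((Rs ! i * D j) *\<^sub>v block_vec n x i) $ q)"
    proof (rule sum.cong[OF refl])
      fix i assume "i \<in> {..<length Rs}"
      then have Ri: "Rs ! i \<in> carrier_mat n n" using Rs by auto
      have "\<forall>j<d. Rs ! i * D j \<in> carrier_mat n n" using Ri D by auto
      then show "((Rs ! i * mat_lincomb n d c D) *\<^sub>v block_vec n x i) $ q =
          (\<Sum>j<d. c j * ((Rs ! i * D j) *\<^sub>v block_vec n x i) $ q)"
        using mult_mat_lincomb[OF Ri D] mat_lincomb_mult_vec_index[OF _ block_vec_carrier q] by simp
    qed
    also have "\<dots> = (\<Sum>j<d. c j * (\<Sum>i<length Rs. ((Rs ! i * D j) *\<^sub>v block_vec n x i) $ q))"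
      by (subst sum.swap) (simp add: sum_distrib_left)
    also have "\<dots> = 0"
      using ker D q mat_kernel_hcat_iff[OF n blocks] by simp
    finally show ?thesis .
  qed
  then show ?thesis using x mat_kernel_hcat_iff[OF n blocks] by simp
qed

lemma invertible_matE:
  assumes P: "P \<in> carrier_mat m m" and "invertible_mat P"
  obtains Q where "Q \<in> carrier_mat m m" "Q * P = 1\<^sub>m m" "P * Q = 1\<^sub>m m"
proof -
  obtain Q where "inverts_mat P Q" "inverts_mat Q P"
    using \<open>invertible_mat P\<close> unfolding invertible_mat_def by blast
  then have PQ: "P * Q = 1\<^sub>m (dim_row P)" and QP: "Q * P = 1\<^sub>m (dim_row Q)"
    unfolding inverts_mat_def by simp_all
  have "dim_row Q = m" using arg_cong[OF QP, of dim_col] P by simp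
  moreover have "dim_col Q = m" using arg_cong[OF PQ, of dim_col] P by simp
  ultimately have Q: "Q \<in> carrier_mat m m" by (rule carrier_matI)
  moreover have "Q * P = 1\<^sub>m m" "P * Q = 1\<^sub>m m" using PQ QP P \<open>dim_row Q = m\<close> by simp_all
  ultimately show ?thesis by (rule that)
qed

lemma invertible_mat_mult_vec_eq_0:
  assumes P: "P \<in> carrier_mat m m" and "invertible_mat P"
    and w: "w \<in> carrier_vec m" and "P *\<^sub>v w = 0\<^sub>v m"
  shows "w = 0\<^sub>v m"
proof -
  obtain Q where Q: "Q \<in> carrier_mat m m" "Q * P = 1\<^sub>m m"
    using invertible_matE[OF assms(1,2)] by blast
  have "w = (Q * P) *\<^sub>v w" using Q(2) w by simp
  also have "\<dots> = Q *\<^sub>v (P *\<^sub>v w)" using Q(1) P w by simp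
  also have "\<dots> = 0\<^sub>v m" using Q(1) \<open>P *\<^sub>v w = 0\<^sub>v m\<close> by auto
  finally show ?thesis .
qed

lemma mat_kernel_L_RsD:
  assumes n: "n > 0" and Rs: "set Rs \<subseteq> carrier_mat n n" and x: "x \<in> mat_kernel (L_Rs n m C P Rs)"
  shows "x \<in> carrier_vec (length Rs * n)"
    and "q < n + m*n \<Longrightarrow> (\<Sum>i<length Rs. (L_R n m C P (Rs ! i) *\<^sub>v block_vec n x i) $ q) = 0"
proof -
  have "set (map (L_R n m C P) Rs) \<subseteq> carrier_mat (n + m*n) n" using Rs
    by (auto intro!: L_R_carrier_mat)
  from x[unfolded L_Rs_def mat_kernel_hcat_iff[OF n this]]
  show "x \<in> carrier_vec (length Rs * n)"
    and "q < n + m*n \<Longrightarrow> (\<Sum>i<length Rs. (L_R n m C P (Rs ! i) *\<^sub>v block_vec n x i) $ q) = 0"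
    by auto
qed

lemma mat_kernel_L_Rs_identity_block:
  assumes n: "n > 0" and Rs: "set Rs \<subseteq> carrier_mat n n" and C: "\<forall>l<m. C l \<in> carrier_mat n n"
    and x: "x \<in> mat_kernel (L_Rs n m C P Rs)"
  shows "x \<in> mat_kernel (hcat n n (map (\<lambda>R. R * 1\<^sub>m n) Rs))"
proof -
  have Ri: "\<And>i. i < length Rs \<Longrightarrow> Rs ! i \<in> carrier_mat n n" using Rs by auto
  have "set (map (\<lambda>R. R * 1\<^sub>m n) Rs) \<subseteq> carrier_mat n n" using Rs by auto
  moreover have "(\<Sum>i<length Rs. ((Rs ! i * 1\<^sub>m n) *\<^sub>v block_vec n x i) $ q) = 0" if q: "q < n" for q
  proof -
    have "(\<Sum>i<length Rs. ((Rs ! i * 1\<^sub>m n) *\<^sub>v block_vec n x i) $ q) =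
        (\<Sum>i<length Rs. (L_R n m C P (Rs ! i) *\<^sub>v block_vec n x i) $ q)"
      using right_mult_one_mat[OF Ri] L_R_mult_vec_index(1)[OF Ri C block_vec_carrier q]
      by (intro sum.cong refl) (simp del: index_mult_mat_vec)
    then show ?thesis using mat_kernel_L_RsD(2)[OF n Rs x] q by simp
  qed
  ultimately show ?thesis
    using mat_kernel_L_RsD(1)[OF n Rs x]
    by (simp add: mat_kernel_hcat_iff[OF n] del: index_mult_mat_vec)
qed

text \<open>The lower block rows of \<open>L\<^sub>R x = 0\<close> say that \<open>P\<close> annihilates the vector
  \<open>(\<Sum>\<^sub>i R\<^sub>i C\<^sub>l\<^sup>* x\<^sub>i)\<^sub>l\<close>; as \<open>P\<close> is invertible, every entry vanishes.\<close>

lemma mat_kernel_L_Rs_adjoint_block: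
  assumes n: "n > 0" and Rs: "set Rs \<subseteq> carrier_mat n n" and C: "\<forall>l<m. C l \<in> carrier_mat n n"
    and P: "P \<in> carrier_mat m m" "invertible_mat P" and x: "x \<in> mat_kernel (L_Rs n m C P Rs)"
    and l: "l < m"
  shows "x \<in> mat_kernel (hcat n n (map (\<lambda>R. R * mat_adjoint (C l)) Rs))"
proof -
  define s where "s l r = (\<Sum>i<length Rs. ((Rs ! i * mat_adjoint (C l)) *\<^sub>v block_vec n x i) $ r)"
    for l r
  have Ri: "\<And>i. i < length Rs \<Longrightarrow> Rs ! i \<in> carrier_mat n n" using Rs by auto
  have zero: "vec m (\<lambda>l. s l r) = 0\<^sub>v m" if r: "r < n" for r
  proof (rule invertible_mat_mult_vec_eq_0[OF P])
    show "P *\<^sub>v vec m (\<lambda>l. s l r) = 0\<^sub>v m"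
    proof (rule eq_vecI)
      fix p assume "p < dim_vec (0\<^sub>v m :: 'a vec)"
      then have p: "p < m" by simp
      have "(P *\<^sub>v vec m (\<lambda>l. s l r)) $ p = (\<Sum>l<m. P $$ (p,l) * s l r)"
        using index_mult_mat_vec_sum[OF P(1) _ p] by simp
      also have "\<dots> = (\<Sum>i<length Rs. (L_R n m C P (Rs ! i) *\<^sub>v block_vec n x i) $ (n + (p*n + r)))"
        using Ri L_R_mult_vec_index(2)[OF _ C block_vec_carrier p r]
        by (simp add: s_def sum_distrib_left) (rule sum.swap)
      also have "\<dots> = 0" using mat_kernel_L_RsD(2)[OF n Rs x] block_index_less[OF p r] by simp
      finally show "(P *\<^sub>v vec m (\<lambda>l. s l r)) $ p = 0\<^sub>v m $ p" using p by simp
    qed (use P(1) in simp)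
  qed simp
  have "s l r = 0" if "r < n" for r
  proof -
    have "vec m (\<lambda>l. s l r) $ l = 0" using zero[OF that] l by simp
    then show ?thesis using l by simp
  qed
  moreover have "set (map (\<lambda>R. R * mat_adjoint (C l)) Rs) \<subseteq> carrier_mat n n" using Rs C l by auto
  ultimately show ?thesis
    using mat_kernel_L_RsD(1)[OF n Rs x]
    by (simp add: mat_kernel_hcat_iff[OF n] s_def del: index_mult_mat_vec)
qed

lemma mat_kernel_M_RsI:
  assumes n: "n > 0" and A: "A \<in> carrier_mat n n" and B: "B \<in> carrier_mat n n"
    and C: "\<forall>l<m. C l \<in> carrier_mat n n" and Rs: "set Rs \<subseteq> carrier_mat n n"
    and xB: "x \<in> mat_kernel (hcat n n (map (\<lambda>R. R * B) Rs))"
    and xA: "\<forall>l<m. x \<in> mat_kernel (hcat n n (map (\<lambda>R. R * (A * mat_adjoint (C l))) Rs))"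
  shows "x \<in> mat_kernel (M_Rs n m C P A B Rs)"
proof -
  have Ri: "\<And>i. i < length Rs \<Longrightarrow> Rs ! i \<in> carrier_mat n n" using Rs by auto
  have blocks: "set (map (\<lambda>R. R * Y) Rs) \<subseteq> carrier_mat n n" if "Y \<in> carrier_mat n n" for Y
    using Rs that by auto
  have "set (map (M_R n m C P A B) Rs) \<subseteq> carrier_mat (n + m*n) n" using Rs B
    by (auto intro!: M_R_carrier_mat)
  note M_kernel = mat_kernel_hcat_iff[OF n this, folded M_Rs_def]
  from xB have xc: "x \<in> carrier_vec (length Rs * n)"
    and B0: "\<And>q. q < n \<Longrightarrow> (\<Sum>i<length Rs. ((Rs ! i * B) *\<^sub>v block_vec n x i) $ q) = 0"
    using mat_kernel_hcat_iff[OF n blocks[OF B]] by auto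
  have A0: "(\<Sum>i<length Rs. ((Rs ! i * (A * mat_adjoint (C l))) *\<^sub>v block_vec n x i) $ r) = 0"
    if "l < m" "r < n" for l r
    using xA that mat_kernel_hcat_iff[OF n blocks, of "A * mat_adjoint (C l)"] A C by auto
  have "(\<Sum>i<length Rs. (M_R n m C P A B (Rs ! i) *\<^sub>v block_vec n x i) $ q) = 0"
    if q: "q < n + m*n" for q
  proof (cases "q < n")
    case True
    then show ?thesis
      using B0 Ri M_R_mult_vec_index(1)[OF _ A B C block_vec_carrier]
      by (simp del: index_mult_mat_vec)
  next
    case False
    define p where "p = (q - n) div n"
    define r where "r = (q - n) mod n"
    have qpr: "q = n + (p*n + r)" using False by (simp add: p_def r_def)
    have r: "r < n" using n by (simp add: r_def)
    have p: "p < m" using q False n by (simp add: p_def less_mult_imp_div_less)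
    have "(\<Sum>i<length Rs. (M_R n m C P A B (Rs ! i) *\<^sub>v block_vec n x i) $ q) =
        - (\<Sum>l<m. P $$ (p,l) *
            (\<Sum>i<length Rs. ((Rs ! i * (A * mat_adjoint (C l))) *\<^sub>v block_vec n x i) $ r))"
      unfolding qpr using Ri M_R_mult_vec_index(2)[OF _ A B C block_vec_carrier p r]
      by (simp add: sum_negf sum_distrib_left) (rule sum.swap)
    then show ?thesis using A0 p r by simp
  qed
  then show ?thesis using M_kernel xc by simp
qed

lemma mat_kernel_L_Rs_subset_M_Rs:
  assumes A: "A \<in> carrier_mat n n" and B: "B \<in> carrier_mat n n"
    and C: "\<forall>l<m. C l \<in> carrier_mat n n" and P: "P \<in> carrier_mat m m" "invertible_mat P"
    and Rs: "set Rs \<subseteq> carrier_mat n n"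
    and B_span: "mat_adjoint B \<in> span_C_I n m C"
    and A_span: "\<forall>l<m. C l * mat_adjoint A \<in> span_C_I n m C"
  shows "mat_kernel (L_Rs n m C P Rs) \<subseteq> mat_kernel (M_Rs n m C P A B Rs)"
proof (cases "n = 0")
  case True
  then show ?thesis by (auto simp: mat_kernel_def M_Rs_def L_Rs_def hcat_def)
next
  case False
  then have n: "n > 0" by simp
  show ?thesis
  proof
    fix x assume x: "x \<in> mat_kernel (L_Rs n m C P Rs)"
    define D where "D = (\<lambda>k. if k < m then C k else 1\<^sub>m n)"
    have D: "\<forall>j<Suc m. D j \<in> carrier_mat n n" using C by (simp add: D_def)
    then have D': "\<forall>j<Suc m. mat_adjoint (D j) \<in> carrier_mat n n" by simp
    have xc: "x \<in> carrier_vec (length Rs * n)"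
      using x by (simp add: mat_kernel_def L_Rs_def hcat_def)
    have xD: "\<forall>j<Suc m. x \<in> mat_kernel (hcat n n (map (\<lambda>R. R * mat_adjoint (D j)) Rs))"
      using mat_kernel_L_Rs_identity_block[OF n Rs C x] mat_kernel_L_Rs_adjoint_block[OF n Rs C P x]
      by (simp add: D_def)
    have xY: "x \<in> mat_kernel (hcat n n (map (\<lambda>R. R * Y) Rs))"
      if Y: "mat_adjoint Y \<in> span_C_I n m C" for Y
    proof -
      have "Y \<in> mat_lin_span n (Suc m) (\<lambda>j. mat_adjoint (D j))"
        using mat_adjoint_mat_lin_span[OF D] Y by (simp add: span_C_I_def D_def)
      then obtain c where "Y = mat_lincomb n (Suc m) c (\<lambda>j. mat_adjoint (D j))"
        unfolding mat_lin_span_eq by blast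
      then show ?thesis using mat_kernel_hcat_mat_lincomb[OF n Rs D' xc xD] by simp
    qed
    have "mat_adjoint (A * mat_adjoint (C l)) = C l * mat_adjoint A" if "l < m" for l
      using mat_adjoint_mult[OF A, of "mat_adjoint (C l)" n] C that by simp
    then show "x \<in> mat_kernel (M_Rs n m C P A B Rs)"
      using mat_kernel_M_RsI[OF n A B C Rs] xY B_span A_span by simp
  qed
qed

section \<open>Bicommutants\<close>

lemma bicomm_carrier_mat: "bicomm n A \<subseteq> carrier_mat n n"
  by (auto simp: bicomm_def commutant_def)

lemma bicomm_self: "A \<in> carrier_mat n n \<Longrightarrow> A \<in> bicomm n A"
  by (auto simp: bicomm_def commutant_def)

lemma bicomm_mult:
  assumes X: "X \<in> bicomm n A" and Y: "Y \<in> bicomm n A"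
  shows "X * Y \<in> bicomm n A"
proof -
  have Xc: "X \<in> carrier_mat n n" and Yc: "Y \<in> carrier_mat n n" using X Y bicomm_carrier_mat by auto
  have "X * Y * Z = Z * (X * Y)" if Z: "Z \<in> commutant n {A}" for Z
  proof -
    have Zc: "Z \<in> carrier_mat n n" using Z by (auto simp: commutant_def)
    have XZ: "X * Z = Z * X" and YZ: "Y * Z = Z * Y" using X Y Z
      by (auto simp: bicomm_def commutant_def)
    have "X * Y * Z = X * (Y * Z)" using Xc Yc Zc by simp
    also have "\<dots> = (X * Z) * Y" unfolding YZ using Xc Yc Zc by simp
    also have "\<dots> = Z * (X * Y)" unfolding XZ using Xc Yc Zc by simp
    finally show ?thesis .
  qed
  then show ?thesis using Xc Yc unfolding bicomm_def commutant_def[of n "commutant n {A}"] by auto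
qed

lemma mat_adjoint_commutant:
  assumes A: "A \<in> carrier_mat n n" and Z: "Z \<in> commutant n {mat_adjoint A}"
  shows "mat_adjoint Z \<in> commutant n {A}"
proof -
  have Zc: "Z \<in> carrier_mat n n" and ZA: "Z * mat_adjoint A = mat_adjoint A * Z"
    using Z by (auto simp: commutant_def)
  have "mat_adjoint Z * A = mat_adjoint (mat_adjoint A * Z)"
    using mat_adjoint_mult[OF mat_adjoint_carrier_mat[OF A] Zc] by simp
  also have "\<dots> = A * mat_adjoint Z"
    using mat_adjoint_mult[OF Zc mat_adjoint_carrier_mat[OF A]] ZA[symmetric] by simp
  finally show ?thesis using Zc by (auto simp: commutant_def)
qed

lemma mat_adjoint_bicomm:
  assumes A: "A \<in> carrier_mat n n" and Y: "Y \<in> bicomm n A"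
  shows "mat_adjoint Y \<in> bicomm n (mat_adjoint A)"
proof -
  have Yc: "Y \<in> carrier_mat n n" using Y bicomm_carrier_mat by auto
  have "mat_adjoint Y * Z = Z * mat_adjoint Y" if Z: "Z \<in> commutant n {mat_adjoint A}" for Z
  proof -
    have Zc: "Z \<in> carrier_mat n n" using Z by (auto simp: commutant_def)
    have YZ: "Y * mat_adjoint Z = mat_adjoint Z * Y"
      using Y mat_adjoint_commutant[OF A Z] by (auto simp: bicomm_def commutant_def)
    have "mat_adjoint Y * Z = mat_adjoint (mat_adjoint Z * Y)"
      using mat_adjoint_mult[OF mat_adjoint_carrier_mat[OF Zc] Yc] by simp
    also have "\<dots> = Z * mat_adjoint Y"
      using mat_adjoint_mult[OF Yc mat_adjoint_carrier_mat[OF Zc]] YZ[symmetric] by simp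
    finally show ?thesis .
  qed
  then show ?thesis using Yc
    unfolding bicomm_def commutant_def[of n "commutant n {mat_adjoint A}"] by auto
qed

lemma mat_kernel_L_Rs_subset_M_Rs_bicomm:
  assumes A: "A \<in> carrier_mat n n" and B: "B \<in> carrier_mat n n" and B_bicomm: "B \<in> bicomm n A"
    and C: "\<forall>l<m. C l \<in> carrier_mat n n" and P: "P \<in> carrier_mat m m" "invertible_mat P"
    and Rs: "set Rs \<subseteq> carrier_mat n n"
    and C_bicomm: "\<forall>l<m. C l \<in> bicomm n (mat_adjoint A)"
    and span: "bicomm n (mat_adjoint A) \<subseteq> span_C_I n m C"
  shows "mat_kernel (L_Rs n m C P Rs) \<subseteq> mat_kernel (M_Rs n m C P A B Rs)"
proof (rule mat_kernel_L_Rs_subset_M_Rs[OF A B C P Rs])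
  show "mat_adjoint B \<in> span_C_I n m C" using span mat_adjoint_bicomm[OF A B_bicomm] by auto
  have "mat_adjoint A \<in> bicomm n (mat_adjoint A)" using A by (simp add: bicomm_self)
  then show "\<forall>l<m. C l * mat_adjoint A \<in> span_C_I n m C"
    using span bicomm_mult C_bicomm by blast
qed

section \<open>Hill representations\<close>

lemma index_hill_sum:
  "i < n \<Longrightarrow> j < n \<Longrightarrow>
    hill_sum n m C H V $$ (i,j) = (\<Sum>k<m. \<Sum>l<m. H $$ (k,l) * (C k * V * mat_adjoint (C l)) $$ (i,j))"
  by (simp add: hill_sum_def)

lemma hill_sum_dim [simp]: "dim_row (hill_sum n m C H V) = n" "dim_col (hill_sum n m C H V) = n"
  by (simp_all add: hill_sum_def)

lemma index_mult_mult_adjoint: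
  assumes F: "F \<in> carrier_mat n n" and V: "V \<in> carrier_mat n n" and G: "G \<in> carrier_mat n n"
    and i: "i < n" and j: "j < n"
  shows "(F * V * mat_adjoint G) $$ (i,j) =
    (\<Sum>a<n. \<Sum>b<n. F $$ (i,a) * V $$ (a,b) * conjugate (G $$ (j,b)))"
proof -
  have "(F * V * mat_adjoint G) $$ (i,j) = (\<Sum>b<n. (F * V) $$ (i,b) * mat_adjoint G $$ (b,j))"
    using F V G i j by (simp add: scalar_prod_def lessThan_atLeast0 del: assoc_mult_mat)
  also have "\<dots> = (\<Sum>b<n. \<Sum>a<n. F $$ (i,a) * V $$ (a,b) * conjugate (G $$ (j,b)))"
    using F V G i j by (intro sum.cong refl) (simp add: scalar_prod_def lessThan_atLeast0
      sum_distrib_right)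
  also have "\<dots> = (\<Sum>a<n. \<Sum>b<n. F $$ (i,a) * V $$ (a,b) * conjugate (G $$ (j,b)))"
    by (rule sum.swap)
  finally show ?thesis .
qed

lemma index_lincomb_mult_lincomb_adjoint:
  fixes s t :: "nat \<Rightarrow> 'a :: conjugatable_field"
  assumes D: "\<forall>p<d. D p \<in> carrier_mat n n" and V: "V \<in> carrier_mat n n"
    and i: "i < n" and j: "j < n"
  shows "(mat_lincomb n d s D * V * mat_adjoint (mat_lincomb n d t D)) $$ (i,j) =
    (\<Sum>p<d. \<Sum>q<d. s p * conjugate (t q) * (D p * V * mat_adjoint (D q)) $$ (i,j))"
proof -
  let ?f = "\<lambda>a b p q.
    s p * conjugate (t q) * (D p $$ (i,a) * V $$ (a,b) * conjugate (D q $$ (j,b)))"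
  have "(mat_lincomb n d s D * V * mat_adjoint (mat_lincomb n d t D)) $$ (i,j) =
      (\<Sum>a<n. \<Sum>b<n.
        mat_lincomb n d s D $$ (i,a) * V $$ (a,b) * conjugate (mat_lincomb n d t D $$ (j,b)))"
    by (rule index_mult_mult_adjoint[OF mat_lincomb_carrier_mat V mat_lincomb_carrier_mat i j])
  also have "\<dots> = (\<Sum>a<n. \<Sum>b<n. \<Sum>p<d. \<Sum>q<d. ?f a b p q)"
    using i j by (intro sum.cong refl)
      (simp add: mat_lincomb_def sum_conjugate conjugate_dist_mul sum_distrib_left
        sum_distrib_right mult_ac)
  also have "\<dots> = (\<Sum>a<n. \<Sum>p<d. \<Sum>b<n. \<Sum>q<d. ?f a b p q)"
    by (rule sum.cong[OF refl], rule sum.swap)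
  also have "\<dots> = (\<Sum>p<d. \<Sum>a<n. \<Sum>b<n. \<Sum>q<d. ?f a b p q)"
    by (rule sum.swap)
  also have "\<dots> = (\<Sum>p<d. \<Sum>a<n. \<Sum>q<d. \<Sum>b<n. ?f a b p q)"
    by (rule sum.cong[OF refl], rule sum.cong[OF refl], rule sum.swap)
  also have "\<dots> = (\<Sum>p<d. \<Sum>q<d. \<Sum>a<n. \<Sum>b<n. ?f a b p q)"
    by (rule sum.cong[OF refl], rule sum.swap)
  also have "\<dots> = (\<Sum>p<d. \<Sum>q<d. s p * conjugate (t q) * (D p * V * mat_adjoint (D q)) $$ (i,j))"
  proof (intro sum.cong refl)
    fix p q assume p: "p \<in> {..<d}" and q: "q \<in> {..<d}"
    have "(D p * V * mat_adjoint (D q)) $$ (i,j) =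
        (\<Sum>a<n. \<Sum>b<n. D p $$ (i,a) * V $$ (a,b) * conjugate (D q $$ (j,b)))"
      using D p q by (intro index_mult_mult_adjoint[OF _ V _ i j]) auto
    then show "(\<Sum>a<n. \<Sum>b<n. ?f a b p q) =
        s p * conjugate (t q) * (D p * V * mat_adjoint (D q)) $$ (i,j)"
      by (simp add: sum_distrib_left)
  qed
  finally show ?thesis .
qed

text \<open>If \<open>C\<^sub>k = \<Sum>\<^sub>p T\<^sub>k\<^sub>p D\<^sub>p\<close>, the Hill sum \<open>\<Sum>\<^sub>k\<^sub>l H\<^sub>k\<^sub>l C\<^sub>k V C\<^sub>l\<^sup>*\<close> is a Hill sum over the
  \<open>D\<^sub>p\<close> whose Hill matrix is \<open>T\<^sup>T H conj(T)\<close>.\<close>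

definition transformed_hill_mat ::
    "nat \<Rightarrow> nat \<Rightarrow> (nat \<Rightarrow> nat \<Rightarrow> 'a :: conjugatable_ordered_field) \<Rightarrow> 'a mat \<Rightarrow> 'a mat" where
  "transformed_hill_mat m d T H =
    mat d d (\<lambda>(p,q). \<Sum>k<m. \<Sum>l<m. T k p * H $$ (k,l) * conjugate (T l q))"

lemma hill_sum_lincomb_family:
  assumes D: "\<forall>p<d. D p \<in> carrier_mat n n" and CT: "\<forall>k<m. C k = mat_lincomb n d (T k) D"
    and V: "V \<in> carrier_mat n n"
  shows "hill_sum n m C H V = hill_sum n d D (transformed_hill_mat m d T H) V"
proof (rule eq_matI)
  fix i j assume "i < dim_row (hill_sum n d D (transformed_hill_mat m d T H) V)"
    and "j < dim_col (hill_sum n d D (transformed_hill_mat m d T H) V)"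
  then have i: "i < n" and j: "j < n" by simp_all
  define M where "M p q = (D p * V * mat_adjoint (D q)) $$ (i,j)" for p q
  let ?g = "\<lambda>k l p q. H $$ (k,l) * (T k p * conjugate (T l q) * M p q)"
  have "hill_sum n m C H V $$ (i,j) = (\<Sum>k<m. \<Sum>l<m. \<Sum>p<d. \<Sum>q<d. ?g k l p q)"
    unfolding index_hill_sum[OF i j]
  proof (intro sum.cong refl)
    fix k l assume k: "k \<in> {..<m}" and l: "l \<in> {..<m}"
    have "(C k * V * mat_adjoint (C l)) $$ (i,j) = (\<Sum>p<d. \<Sum>q<d. T k p * conjugate (T l q) * M p q)"
      using CT k l index_lincomb_mult_lincomb_adjoint[OF D V i j] by (simp add: M_def)
    then show "H $$ (k,l) * (C k * V * mat_adjoint (C l)) $$ (i,j) = (\<Sum>p<d. \<Sum>q<d. ?g k l p q)"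
      by (simp add: sum_distrib_left)
  qed
  also have "\<dots> = (\<Sum>k<m. \<Sum>p<d. \<Sum>l<m. \<Sum>q<d. ?g k l p q)"
    by (rule sum.cong[OF refl], rule sum.swap)
  also have "\<dots> = (\<Sum>p<d. \<Sum>k<m. \<Sum>l<m. \<Sum>q<d. ?g k l p q)"
    by (rule sum.swap)
  also have "\<dots> = (\<Sum>p<d. \<Sum>k<m. \<Sum>q<d. \<Sum>l<m. ?g k l p q)"
    by (rule sum.cong[OF refl], rule sum.cong[OF refl], rule sum.swap)
  also have "\<dots> = (\<Sum>p<d. \<Sum>q<d. \<Sum>k<m. \<Sum>l<m. ?g k l p q)"
    by (rule sum.cong[OF refl], rule sum.swap)
  also have "\<dots> = (\<Sum>p<d. \<Sum>q<d. transformed_hill_mat m d T H $$ (p,q) * M p q)"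
    by (intro sum.cong refl) (simp add: transformed_hill_mat_def sum_distrib_right
      sum_distrib_left mult_ac)
  also have "\<dots> = hill_sum n d D (transformed_hill_mat m d T H) V $$ (i,j)"
    using i j by (simp add: hill_sum_def M_def)
  finally show "hill_sum n m C H V $$ (i,j) =
      hill_sum n d D (transformed_hill_mat m d T H) V $$ (i,j)" .
qed simp_all

definition skip_index :: "nat \<Rightarrow> nat \<Rightarrow> nat" where
  "skip_index j p = (if p < j then p else Suc p)"

lemma bij_betw_skip_index:
  assumes "j < m"
  shows "bij_betw (skip_index j) {..<m - 1} ({..<m} - {j})"
proof (rule bij_betw_imageI)
  show "inj_on (skip_index j) {..<m - 1}" by (auto simp: inj_on_def skip_index_def split: if_splits)
  have "l \<in> skip_index j ` {..<m - 1}" if "l < m" "l \<noteq> j" for l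
  proof (cases "l < j")
    case True
    then show ?thesis using that assms by (intro image_eqI[of _ _ l]) (auto simp: skip_index_def)
  next
    case False
    then show ?thesis using that by (intro image_eqI[of _ _ "l - 1"]) (auto simp: skip_index_def)
  qed
  then show "skip_index j ` {..<m - 1} = {..<m} - {j}"
    using assms by (auto simp: skip_index_def)
qed

lemma mat_lincomb_eq_0_drop_member:
  fixes C :: "nat \<Rightarrow> 'a :: field mat"
  assumes C: "\<forall>k<m. C k \<in> carrier_mat n n" and dep: "mat_lincomb n m c C = 0\<^sub>m n n"
    and j: "j < m" and cj: "c j \<noteq> 0"
  defines "T k p \<equiv>
    if k = j then - (c (skip_index j p) / c j) else if k = skip_index j p then 1 else 0"
  shows "\<forall>k<m. C k = mat_lincomb n (m - 1) (T k) (\<lambda>p. C (skip_index j p))"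
proof (intro allI impI)
  fix k assume k: "k < m"
  show "C k = mat_lincomb n (m - 1) (T k) (\<lambda>p. C (skip_index j p))"
  proof (rule eq_carrier_matI)
    fix a b assume a: "a < n" and b: "b < n"
    have "mat_lincomb n (m - 1) (T k) (\<lambda>p. C (skip_index j p)) $$ (a,b) =
        (\<Sum>l\<in>{..<m} - {j}. (if k = j then - (c l / c j) else if k = l then 1 else 0) * C l $$ (a,b))"
      using a b sum.reindex_bij_betw[OF bij_betw_skip_index[OF j],
          of "\<lambda>l. (if k = j then - (c l / c j) else if k = l then 1 else 0) * C l $$ (a,b)"]
      by (simp add: mat_lincomb_def T_def)
    also have "\<dots> = C k $$ (a,b)"
    proof (cases "k = j")
      case True
      have "c j * C j $$ (a,b) + (\<Sum>l\<in>{..<m} - {j}. c l * C l $$ (a,b)) = 0"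
        using dep a b j unfolding mat_lincomb_eq_0_iff by (simp add: sum.remove[of _ j])
      then have "- (\<Sum>l\<in>{..<m} - {j}. c l * C l $$ (a,b)) / c j = C j $$ (a,b)"
        using cj by (simp add: field_simps add_eq_0_iff)
      then show ?thesis using True by (simp add: sum_divide_distrib[symmetric] sum_negf)
    next
      case False
      then show ?thesis using k by (simp add: if_distrib[of "\<lambda>x. x * _"] sum.delta cong: if_cong)
    qed
    finally show "C k $$ (a,b) = mat_lincomb n (m - 1) (T k) (\<lambda>p. C (skip_index j p)) $$ (a,b)"
      by simp
  qed (use C k in auto)
qed

lemma min_hill_rep_lin_indep:
  assumes min: "min_hill_rep n \<Phi> m C H"
  shows "mat_lin_indep n m C"
  unfolding mat_lin_indep_def
proof (intro allI impI; rule ccontr)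
  fix c j assume dep: "mat_lincomb n m c C = 0\<^sub>m n n" and j: "j < m" and cj: "c j \<noteq> 0"
  have C: "\<forall>k<m. C k \<in> carrier_mat n n" and \<Phi>: "\<forall>V\<in>carrier_mat n n. \<Phi> V = hill_sum n m C H V"
    using min by (auto simp: min_hill_rep_def hill_rep_def)
  define T where "T k p = (if k = j then - (c (skip_index j p) / c j) else if k = skip_index j p
      then 1 else 0)"
    for k p
  have T: "\<forall>k<m. C k = mat_lincomb n (m - 1) (T k) (\<lambda>p. C (skip_index j p))"
    unfolding T_def by (rule mat_lincomb_eq_0_drop_member[OF C dep j cj])
  have D: "\<forall>p<m - 1. C (skip_index j p) \<in> carrier_mat n n"
    using C j by (auto simp: skip_index_def)
  have "hill_rep n \<Phi> (m - 1) (\<lambda>p. C (skip_index j p)) (transformed_hill_mat m (m - 1) T H)"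
    unfolding hill_rep_def using \<Phi> hill_sum_lincomb_family[OF D T] D
    by (simp add: transformed_hill_mat_def)
  then have "m \<le> m - 1" using min unfolding min_hill_rep_def by blast
  then show False using j by simp
qed

definition matrix_unit :: "nat \<Rightarrow> nat \<Rightarrow> nat \<Rightarrow> 'a :: zero_neq_one mat" where
  "matrix_unit n a b = mat n n (\<lambda>(x,y). if x = a \<and> y = b then 1 else 0)"

lemma matrix_unit_carrier_mat [simp]: "matrix_unit n a b \<in> carrier_mat n n"
  by (simp add: matrix_unit_def)

lemma index_mult_matrix_unit_mult_adjoint:
  assumes F: "F \<in> carrier_mat n n" and G: "G \<in> carrier_mat n n"
    and a: "a < n" and b: "b < n" and i: "i < n" and j: "j < n"
  shows "(F * matrix_unit n a b * mat_adjoint G) $$ (i,j) = F $$ (i,a) * conjugate (G $$ (j,b))"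
proof -
  let ?t = "\<lambda>x y. F $$ (i,x) * matrix_unit n a b $$ (x,y) * conjugate (G $$ (j,y))"
  have "(\<Sum>y<n. ?t x y) = (if x = a then F $$ (i,a) * conjugate (G $$ (j,b)) else 0)"
    if "x < n" for x
    using that b by (subst sum_lessThan_single[OF b]) (auto simp: matrix_unit_def)
  then show ?thesis
    using index_mult_mult_adjoint[OF F matrix_unit_carrier_mat G i j] a by (simp add: sum.delta)
qed

lemma index_hill_sum_matrix_unit:
  assumes C: "\<forall>k<m. C k \<in> carrier_mat n n" and "a < n" "b < n" "i < n" "j < n"
  shows "hill_sum n m C H (matrix_unit n a b) $$ (i,j) =
    (\<Sum>k<m. \<Sum>l<m. H $$ (k,l) * (C k $$ (i,a) * conjugate (C l $$ (j,b))))"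
  using assms by (auto simp: index_hill_sum index_mult_matrix_unit_mult_adjoint intro!: sum.cong)

lemma index_hill_sum_mult_matrix_unit:
  assumes C: "\<forall>k<m. C k \<in> carrier_mat n n" and Z: "Z \<in> carrier_mat n n"
    and ab: "a < n" "b < n" and ij: "i < n" "j < n"
  shows "hill_sum n m C H (Z * matrix_unit n a b) $$ (i,j) =
    (\<Sum>k<m. \<Sum>l<m. H $$ (k,l) * ((C k * Z) $$ (i,a) * conjugate (C l $$ (j,b))))"
  unfolding index_hill_sum[OF ij]
proof (intro sum.cong refl)
  fix k l assume "k \<in> {..<m}" "l \<in> {..<m}"
  then have Ck: "C k \<in> carrier_mat n n" and Cl: "C l \<in> carrier_mat n n" using C by auto
  have "C k * (Z * matrix_unit n a b) * mat_adjoint (C l) = C k * Z * matrix_unit n a b *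
      mat_adjoint (C l)"
    using Ck Z by (simp add: assoc_mult_mat[of _ n n _ n _ n])
  then show "H $$ (k,l) * (C k * (Z * matrix_unit n a b) * mat_adjoint (C l)) $$ (i,j) =
      H $$ (k,l) * ((C k * Z) $$ (i,a) * conjugate (C l $$ (j,b)))"
    using index_mult_matrix_unit_mult_adjoint[OF mult_carrier_mat[OF Ck Z] Cl ab ij] by simp
qed

lemma index_mult_hill_sum_matrix_unit:
  assumes C: "\<forall>k<m. C k \<in> carrier_mat n n" and Z: "Z \<in> carrier_mat n n"
    and ab: "a < n" "b < n" and ij: "i < n" "j < n"
  shows "(Z * hill_sum n m C H (matrix_unit n a b)) $$ (i,j) =
    (\<Sum>k<m. \<Sum>l<m. H $$ (k,l) * ((Z * C k) $$ (i,a) * conjugate (C l $$ (j,b))))"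
proof -
  let ?t = "\<lambda>k l x. Z $$ (i,x) * (H $$ (k,l) * (C k $$ (x,a) * conjugate (C l $$ (j,b))))"
  have "(Z * hill_sum n m C H (matrix_unit n a b)) $$ (i,j) =
      (\<Sum>x<n. Z $$ (i,x) * hill_sum n m C H (matrix_unit n a b) $$ (x,j))"
    using Z ij by (simp add: scalar_prod_def lessThan_atLeast0)
  also have "\<dots> = (\<Sum>x<n. \<Sum>k<m. \<Sum>l<m. ?t k l x)"
    using index_hill_sum_matrix_unit[OF C ab _ ij(2)] by (simp add: sum_distrib_left)
  also have "\<dots> = (\<Sum>k<m. \<Sum>l<m. \<Sum>x<n. ?t k l x)"
    by (subst sum.swap) (rule sum.cong[OF refl], rule sum.swap)
  also have "\<dots> = (\<Sum>k<m. \<Sum>l<m. H $$ (k,l) * ((Z * C k) $$ (i,a) * conjugate (C l $$ (j,b))))"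
  proof (intro sum.cong refl)
    fix k l assume "k \<in> {..<m}"
    then have "C k \<in> carrier_mat n n" using C by auto
    then have "(Z * C k) $$ (i,a) = (\<Sum>x<n. Z $$ (i,x) * C k $$ (x,a))"
      using Z ij ab by (simp add: scalar_prod_def lessThan_atLeast0)
    then show "(\<Sum>x<n. ?t k l x) = H $$ (k,l) * ((Z * C k) $$ (i,a) * conjugate (C l $$ (j,b)))"
      by (simp add: sum_distrib_left sum_distrib_right mult_ac)
  qed
  finally show ?thesis .
qed

lemma sum_mult_right_invertible_eq_0:
  fixes H K :: "'a :: comm_ring_1 mat"
  assumes H: "H \<in> carrier_mat m m" and K: "K \<in> carrier_mat m m" and HK: "H * K = 1\<^sub>m m"
    and h: "\<forall>l<m. (\<Sum>k<m. d k * H $$ (k,l)) = 0" and k': "k' < m"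
  shows "d k' = 0"
proof -
  have "d k' = (\<Sum>k<m. d k * (H * K) $$ (k,k'))"
    using k' by (simp add: HK if_distrib[of "\<lambda>x. _ * x"] sum.delta cong: if_cong)
  also have "\<dots> = (\<Sum>k<m. \<Sum>l<m. d k * H $$ (k,l) * K $$ (l,k'))"
    using H K k' by (intro sum.cong refl) (simp add: scalar_prod_def lessThan_atLeast0
      sum_distrib_left mult_ac)
  also have "\<dots> = (\<Sum>l<m. (\<Sum>k<m. d k * H $$ (k,l)) * K $$ (l,k'))"
    by (subst sum.swap) (simp add: sum_distrib_right)
  also have "\<dots> = 0" using h by simp
  finally show ?thesis .
qed

text \<open>Compare \<open>\<Phi>(Z E\<^sub>a\<^sub>b) = Z \<Phi>(E\<^sub>a\<^sub>b)\<close> entrywise: the row vector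
  \<open>d\<^sub>k = (C\<^sub>k Z - Z C\<^sub>k)\<^sub>i\<^sub>a\<close> satisfies \<open>\<Sum>\<^sub>l (d H)\<^sub>l C\<^sub>l\<^sup>* = 0\<close>, so \<open>d H = 0\<close> by
  independence of the \<open>C\<^sub>l\<close>, and \<open>d = 0\<close> since \<open>H\<close> is invertible.\<close>

lemma min_hill_rep_commute:
  assumes min: "min_hill_rep n \<Phi> m C H" and K: "K \<in> carrier_mat m m" "H * K = 1\<^sub>m m"
    and Z: "Z \<in> carrier_mat n n" and commute: "\<forall>V\<in>carrier_mat n n. \<Phi> (Z * V) = Z * \<Phi> V"
    and k: "k < m"
  shows "C k * Z = Z * C k"
proof (rule eq_matI)
  have C: "\<forall>k<m. C k \<in> carrier_mat n n" and H: "H \<in> carrier_mat m m"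
    and \<Phi>: "\<forall>V\<in>carrier_mat n n. \<Phi> V = hill_sum n m C H V"
    using min by (auto simp: min_hill_rep_def hill_rep_def)
  fix i a assume "i < dim_row (Z * C k)" "a < dim_col (Z * C k)"
  then have i: "i < n" and a: "a < n" using C Z k by auto
  define d where "d k' = (C k' * Z) $$ (i,a) - (Z * C k') $$ (i,a)" for k'
  define g where "g l = (\<Sum>k'<m. d k' * H $$ (k',l))" for l
  have "mat_lincomb n m (\<lambda>l. conjugate (g l)) C = 0\<^sub>m n n"
    unfolding mat_lincomb_eq_0_iff
  proof (intro allI impI)
    fix j b assume j: "j < n" and b: "b < n"
    let ?E = "matrix_unit n a b"
    have "hill_sum n m C H (Z * ?E) $$ (i,j) = (Z * hill_sum n m C H ?E) $$ (i,j)"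
      using commute \<Phi> Z by simp
    then have "(\<Sum>k'<m. \<Sum>l<m. H $$ (k',l) * ((C k' * Z) $$ (i,a) * conjugate (C l $$ (j,b)))) =
        (\<Sum>k'<m. \<Sum>l<m. H $$ (k',l) * ((Z * C k') $$ (i,a) * conjugate (C l $$ (j,b))))"
      unfolding index_hill_sum_mult_matrix_unit[OF C Z a b i j]
        index_mult_hill_sum_matrix_unit[OF C Z a b i j] .
    then have "(\<Sum>k'<m. \<Sum>l<m. H $$ (k',l) * (d k' * conjugate (C l $$ (j,b)))) = 0"
      by (simp add: d_def algebra_simps sum_subtractf)
    moreover have "(\<Sum>l<m. g l * conjugate (C l $$ (j,b))) =
        (\<Sum>k'<m. \<Sum>l<m. H $$ (k',l) * (d k' * conjugate (C l $$ (j,b))))"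
      unfolding g_def sum_distrib_right by (subst sum.swap) (simp add: mult_ac)
    ultimately have "conjugate (\<Sum>l<m. g l * conjugate (C l $$ (j,b))) = 0" by simp
    then show "(\<Sum>l<m. conjugate (g l) * C l $$ (j,b)) = 0"
      by (simp add: sum_conjugate conjugate_dist_mul)
  qed
  then have "\<forall>l<m. g l = 0"
    using mat_lin_indepD[OF min_hill_rep_lin_indep[OF min]] by fastforce
  then have "d k = 0" using sum_mult_right_invertible_eq_0[OF H K _ k] by (simp add: g_def)
  then show "(C k * Z) $$ (i,a) = (Z * C k) $$ (i,a)" by (simp add: d_def)
qed (use min k Z in \<open>auto simp: min_hill_rep_def hill_rep_def\<close>)

lemma min_hill_rep_bicomm:
  fixes A :: "'a :: conjugatable_ordered_field mat"
  assumes min: "min_hill_rep n \<Phi> m C H" and K: "K \<in> carrier_mat m m" "H * K = 1\<^sub>m m"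
    and commute: "\<forall>Z\<in>commutant n {mat_adjoint A}. \<forall>V\<in>carrier_mat n n. \<Phi> (Z * V) = Z * \<Phi> V"
    and k: "k < m"
  shows "C k \<in> bicomm n (mat_adjoint A)"
proof -
  have "C k * Z = Z * C k" if "Z \<in> commutant n {mat_adjoint A}" for Z
    using that commute by (intro min_hill_rep_commute[OF min K _ _ k]) (auto simp: commutant_def)
  moreover have "C k \<in> carrier_mat n n" using min k by (auto simp: min_hill_rep_def hill_rep_def)
  ultimately show ?thesis
    unfolding bicomm_def commutant_def[of n "commutant n {mat_adjoint A}"] by auto
qed

section \<open>Dimension of spaces of matrices\<close>

lemma homogeneous_system_nontrivial_solution:
  fixes a :: "nat \<Rightarrow> nat \<Rightarrow> 'a :: field"
  assumes MN: "M < N"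
  shows "\<exists>c. (\<exists>i<N. c i \<noteq> 0) \<and> (\<forall>k<M. (\<Sum>i<N. a k i * c i) = 0)"
proof -
  \<comment> \<open>pad the system with zero rows to a square matrix, whose last row vanishes\<close>
  define Mt where "Mt = mat N N (\<lambda>(k,i). if k < M then a k i else 0)"
  have Mc: "Mt \<in> carrier_mat N N" by (simp add: Mt_def)
  have N1: "N - 1 < N" using MN by simp
  have "multrow (N - 1) 0 Mt = Mt"
    using MN by (intro eq_matI) (auto simp: Mt_def mat_multrow_gen_def)
  then have "det Mt = 0" using det_multrow[OF N1 Mc, of 0] by simp
  then obtain v where v: "v \<in> carrier_vec N" "v \<noteq> 0\<^sub>v N" "Mt *\<^sub>v v = 0\<^sub>v N"
    using det_0_iff_vec_prod_zero[OF Mc] by blast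
  have "\<exists>i<N. v $ i \<noteq> 0"
  proof (rule ccontr)
    assume "\<not> (\<exists>i<N. v $ i \<noteq> 0)"
    then have "v = 0\<^sub>v N" using v(1) by (intro eq_vecI) auto
    then show False using v(2) by simp
  qed
  moreover have "(\<Sum>i<N. a k i * v $ i) = 0" if k: "k < M" for k
  proof -
    have "(Mt *\<^sub>v v) $ k = 0" using v(3) k MN by simp
    moreover have "(Mt *\<^sub>v v) $ k = (\<Sum>i<N. Mt $$ (k,i) * v $ i)"
      using index_mult_mat_vec_sum[OF Mc v(1)] k MN by simp
    ultimately show ?thesis using k MN by (simp add: Mt_def)
  qed
  ultimately show ?thesis by blast
qed

lemma mat_lin_span_dependent:
  fixes Y D :: "nat \<Rightarrow> 'a :: conjugatable_ordered_field mat"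
  assumes "d < N" and Y: "\<forall>i<N. Y i \<in> mat_lin_span n d D"
  shows "\<exists>c. (\<exists>i<N. c i \<noteq> 0) \<and> mat_lincomb n N c Y = 0\<^sub>m n n"
proof -
  have "\<forall>i<N. \<exists>e. Y i = mat_lincomb n d e D" using Y unfolding mat_lin_span_eq by blast
  then obtain e where e: "\<forall>i<N. Y i = mat_lincomb n d (e i) D" by metis
  obtain c where c: "\<exists>i<N. c i \<noteq> 0" "\<forall>k<d. (\<Sum>i<N. e i k * c i) = 0"
    using homogeneous_system_nontrivial_solution[OF \<open>d < N\<close>, of "\<lambda>k i. e i k"] by blast
  have "(\<Sum>i<N. c i * Y i $$ (a,b)) = 0" if "a < n" "b < n" for a b
  proof -
    have "(\<Sum>i<N. c i * Y i $$ (a,b)) = (\<Sum>i<N. \<Sum>k<d. c i * (e i k * D k $$ (a,b)))"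
      using e that by (intro sum.cong refl) (simp add: mat_lincomb_def sum_distrib_left)
    also have "\<dots> = (\<Sum>k<d. (\<Sum>i<N. e i k * c i) * D k $$ (a,b))"
      by (subst sum.swap) (simp add: sum_distrib_left sum_distrib_right mult_ac)
    also have "\<dots> = 0" using c(2) by simp
    finally show ?thesis .
  qed
  then show ?thesis using c(1) unfolding mat_lincomb_eq_0_iff by blast
qed

lemma mat_lin_indep_le:
  fixes F :: "nat \<Rightarrow> 'a :: conjugatable_ordered_field mat"
  assumes "mat_lin_indep n d F" and "\<forall>k<d. F k \<in> mat_lin_span n e G"
  shows "d \<le> e"
proof (rule ccontr)
  assume "\<not> d \<le> e"
  then obtain c where "\<exists>i<d. c i \<noteq> 0" "mat_lincomb n d c F = 0\<^sub>m n n"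
    using mat_lin_span_dependent[of e d F n G] assms(2) by auto
  then show False using mat_lin_indepD[OF assms(1)] by blast
qed

lemma index_mat_lincomb_matrix_units:
  assumes "a < n" "b < n"
  shows "mat_lincomb n (n*n) c (\<lambda>q. matrix_unit n (q div n) (q mod n)) $$ (a,b) = c (a*n + b)"
proof -
  have "mat_lincomb n (n*n) c (\<lambda>q. matrix_unit n (q div n) (q mod n)) $$ (a,b) =
      (\<Sum>q<n*n. c q * matrix_unit n (q div n) (q mod n) $$ (a,b))"
    using assms by (simp add: mat_lincomb_def)
  also have "\<dots> = (\<Sum>i<n. \<Sum>s<n. c (i*n+s) * matrix_unit n ((i*n+s) div n) ((i*n+s) mod n) $$ (a,b))"
    by (rule sum_lessThan_mult)
  also have "\<dots> = (\<Sum>i<n. \<Sum>s<n. if i = a then (if s = b then c (a*n + b) else 0) else 0)"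
    using assms by (intro sum.cong refl) (auto simp: matrix_unit_def)
  also have "\<dots> = (\<Sum>i<n. if i = a then c (a*n + b) else 0)"
    using assms by (intro sum.cong refl) (simp add: sum.delta)
  also have "\<dots> = c (a*n + b)" using assms by (simp add: sum.delta)
  finally show ?thesis .
qed

lemma mat_lin_span_matrix_units:
  assumes Y: "Y \<in> carrier_mat n n"
  shows "Y \<in> mat_lin_span n (n*n) (\<lambda>q. matrix_unit n (q div n) (q mod n))"
proof -
  let ?E = "\<lambda>q. matrix_unit n (q div n) (q mod n)" and ?c = "\<lambda>q. Y $$ (q div n, q mod n)"
  have "Y = mat_lincomb n (n*n) ?c ?E"
  proof (rule eq_carrier_matI)
    fix a b assume a: "a < n" and b: "b < n"
    show "Y $$ (a,b) = mat_lincomb n (n*n) ?c ?E $$ (a,b)"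
      unfolding index_mat_lincomb_matrix_units[OF a b] using b by simp
  qed (use Y in auto)
  then show ?thesis unfolding mat_lin_span_eq by blast
qed

lemma mat_lin_indep_matrix_units: "mat_lin_indep n (n*n) (\<lambda>q. matrix_unit n (q div n) (q mod n))"
  unfolding mat_lin_indep_def
proof (intro allI impI)
  fix c q assume zero: "mat_lincomb n (n*n) c (\<lambda>q. matrix_unit n (q div n) (q mod n)) = 0\<^sub>m n n"
    and q: "q < n*n"
  moreover have "n > 0" using q by (cases n) auto
  ultimately have "q div n < n" "q mod n < n" using q by (auto simp: less_mult_imp_div_less)
  then show "c q = 0"
    using zero index_mat_lincomb_matrix_units[of "q div n" n "q mod n" c] by simp
qed

lemma mat_lin_indep_extend:
  fixes F :: "nat \<Rightarrow> 'a :: conjugatable_ordered_field mat"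
  assumes indep: "mat_lin_indep n d F" and Yc: "Y \<in> carrier_mat n n" and Y: "Y \<notin> mat_lin_span n d F"
  shows "mat_lin_indep n (Suc d) (F(d := Y))"
  unfolding mat_lin_indep_def
proof (intro allI impI)
  fix c k assume "mat_lincomb n (Suc d) c (F(d := Y)) = 0\<^sub>m n n" and k: "k < Suc d"
  then have rel: "\<forall>a<n. \<forall>b<n. (\<Sum>k<d. c k * F k $$ (a,b)) + c d * Y $$ (a,b) = 0"
    unfolding mat_lincomb_eq_0_iff by simp
  have cd: "c d = 0"
  proof (rule ccontr)
    assume cd: "c d \<noteq> 0"
    have "Y = mat_lincomb n d (\<lambda>k. - c k / c d) F"
    proof (rule eq_matI)
      fix a b assume "a < dim_row (mat_lincomb n d (\<lambda>k. - c k / c d) F)"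
        and "b < dim_col (mat_lincomb n d (\<lambda>k. - c k / c d) F)"
      then have a: "a < n" and b: "b < n" by (simp_all add: mat_lincomb_def)
      have "c d * Y $$ (a,b) = - (\<Sum>k<d. c k * F k $$ (a,b))" using rel a b
        by (simp add: eq_neg_iff_add_eq_0 add.commute)
      then show "Y $$ (a,b) = mat_lincomb n d (\<lambda>k. - c k / c d) F $$ (a,b)"
        using a b cd
        by (simp add: mat_lincomb_def sum_divide_distrib[symmetric] sum_negf field_simps)
    qed (use Yc in \<open>simp_all add: mat_lincomb_def\<close>)
    then show False using Y unfolding mat_lin_span_eq by blast
  qed
  then have "mat_lincomb n d c F = 0\<^sub>m n n" using rel unfolding mat_lincomb_eq_0_iff by simp
  then show "c k = 0" using indep cd k unfolding mat_lin_indep_def by (cases "k = d") auto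
qed

lemma mat_lin_indep_spans:
  fixes F :: "nat \<Rightarrow> 'a :: conjugatable_ordered_field mat"
  assumes indep: "mat_lin_indep n m F" and F: "\<forall>k<m. F k \<in> T" and T: "T \<subseteq> carrier_mat n n"
    and span: "T \<subseteq> mat_lin_span n m G"
  shows "T \<subseteq> mat_lin_span n m F"
proof
  fix Y assume Y: "Y \<in> T"
  show "Y \<in> mat_lin_span n m F"
  proof (rule ccontr)
    assume "Y \<notin> mat_lin_span n m F"
    then have "mat_lin_indep n (Suc m) (F(m := Y))"
      using mat_lin_indep_extend[OF indep] Y T by blast
    moreover have "\<forall>k<Suc m. (F(m := Y)) k \<in> mat_lin_span n m G" using span F Y
      by (auto simp: less_Suc_eq)
    ultimately show False using mat_lin_indep_le by fastforce
  qed
qed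

text \<open>A maximal independent family in \<open>S\<close> spans \<open>S\<close>; one exists because independent
  families of \<open>n \<times> n\<close> matrices have at most \<open>n\<^sup>2\<close> members.\<close>

lemma finite_spanning_family:
  fixes S :: "'a :: conjugatable_ordered_field mat set"
  assumes S: "S \<subseteq> carrier_mat n n"
  shows "\<exists>d D. (\<forall>k<d. D k \<in> S) \<and> S \<subseteq> mat_lin_span n d D"
proof -
  define indep_in where "indep_in d \<longleftrightarrow> (\<exists>F. (\<forall>k<d. F k \<in> S) \<and> mat_lin_indep n d F)" for d
  have bound: "d \<le> n*n" if "indep_in d" for d
  proof -
    obtain F where F: "\<forall>k<d. F k \<in> S" "mat_lin_indep n d F"
      using \<open>indep_in d\<close> unfolding indep_in_def by blast
    then have "\<forall>k<d. F k \<in> mat_lin_span n (n*n) (\<lambda>q. matrix_unit n (q div n) (q mod n))"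
      using S mat_lin_span_matrix_units by blast
    then show ?thesis using mat_lin_indep_le[OF F(2)] by blast
  qed
  define d where "d = (GREATEST d. indep_in d)"
  have "indep_in 0" unfolding indep_in_def mat_lin_indep_def by auto
  then have "indep_in d" unfolding d_def by (rule GreatestI_nat) (use bound in blast)
  then obtain F where F: "\<forall>k<d. F k \<in> S" "mat_lin_indep n d F" unfolding indep_in_def by blast
  have "Y \<in> mat_lin_span n d F" if Y: "Y \<in> S" for Y
  proof (rule ccontr)
    assume "Y \<notin> mat_lin_span n d F"
    then have "mat_lin_indep n (Suc d) (F(d := Y))" using mat_lin_indep_extend[OF F(2)] Y S by blast
    moreover have "\<forall>k<Suc d. (F(d := Y)) k \<in> S" using F(1) Y by auto
    ultimately have "Suc d \<le> d" unfolding d_def indep_in_def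
      by (intro Greatest_le_nat) (use bound indep_in_def in blast)+
    then show False by simp
  qed
  then show ?thesis using F(1) by blast
qed

lemma mat_subspace_dim_spanning_family:
  fixes S :: "'a :: conjugatable_ordered_field mat set"
  assumes "S \<subseteq> carrier_mat n n"
  shows "\<exists>D. (\<forall>k<mat_subspace_dim n S. D k \<in> S) \<and> S \<subseteq> mat_lin_span n (mat_subspace_dim n S) D"
  unfolding mat_subspace_dim_def using finite_spanning_family[OF assms] by (rule LeastI_ex)

section \<open>The Lyapunov operator\<close>

definition lyap_nonsingular :: "nat \<Rightarrow> 'a :: conjugatable_ordered_field mat \<Rightarrow> bool" where
  "lyap_nonsingular n A \<longleftrightarrow> (\<forall>X\<in>carrier_mat n n. lyap_op A X = 0\<^sub>m n n \<longrightarrow> X = 0\<^sub>m n n)"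

lemma lyap_op_carrier_mat:
  "A \<in> carrier_mat n n \<Longrightarrow> X \<in> carrier_mat n n \<Longrightarrow> lyap_op A X \<in> carrier_mat n n"
  unfolding lyap_op_def by (intro add_carrier_mat mult_carrier_mat) auto

lemma index_lyap_op:
  assumes "A \<in> carrier_mat n n" "X \<in> carrier_mat n n" "i < n" "j < n"
  shows "lyap_op A X $$ (i,j) =
    (\<Sum>k<n. X $$ (i,k) * A $$ (k,j)) + (\<Sum>k<n. conjugate (A $$ (k,i)) * X $$ (k,j))"
  using assms by (simp add: lyap_op_def scalar_prod_def lessThan_atLeast0)

lemma lyap_op_minus:
  assumes A: "A \<in> carrier_mat n n" and X: "X \<in> carrier_mat n n" and Y: "Y \<in> carrier_mat n n"
  shows "lyap_op A (X - Y) = lyap_op A X - lyap_op A Y"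
proof (rule eq_carrier_matI)
  fix i j assume i: "i < n" and j: "j < n"
  have XY: "X - Y \<in> carrier_mat n n" using X Y by auto
  show "lyap_op A (X - Y) $$ (i,j) = (lyap_op A X - lyap_op A Y) $$ (i,j)"
    using index_lyap_op[OF A XY i j] index_lyap_op[OF A X i j] index_lyap_op[OF A Y i j]
      lyap_op_carrier_mat[OF A X] lyap_op_carrier_mat[OF A Y] i j X Y
    by (simp add: algebra_simps sum_subtractf)
next
  show "lyap_op A (X - Y) \<in> carrier_mat n n" using X Y by (intro lyap_op_carrier_mat[OF A]) auto
  show "lyap_op A X - lyap_op A Y \<in> carrier_mat n n"
    using lyap_op_carrier_mat[OF A Y] by (rule minus_carrier_mat)
qed


lemma lyap_op_mat_lincomb:
  assumes A: "A \<in> carrier_mat n n" and D: "\<forall>j<d. D j \<in> carrier_mat n n"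
  shows "lyap_op A (mat_lincomb n d c D) = mat_lincomb n d c (\<lambda>j. lyap_op A (D j))"
proof -
  have "\<forall>j<d. D j * A \<in> carrier_mat n n" "\<forall>j<d. mat_adjoint A * D j \<in> carrier_mat n n"
    using D A mult_carrier_mat[OF mat_adjoint_carrier_mat[OF A]] by auto
  then show ?thesis
    unfolding lyap_op_def mat_lincomb_mult[OF D A]
      mult_mat_lincomb[OF mat_adjoint_carrier_mat[OF A] D]
    by (rule mat_lincomb_add)
qed

lemma lyap_op_inj:
  assumes A: "A \<in> carrier_mat n n" and nonsing: "lyap_nonsingular n A"
  shows "inj_on (lyap_op A) (carrier_mat n n)"
proof (rule inj_onI)
  fix X Y assume X: "X \<in> carrier_mat n n" and Y: "Y \<in> carrier_mat n n"
    and eq: "lyap_op A X = lyap_op A Y"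
  have "lyap_op A (X - Y) = 0\<^sub>m n n"
    using lyap_op_minus[OF A X Y] eq lyap_op_carrier_mat[OF A Y] by simp
  moreover have "X - Y \<in> carrier_mat n n" using Y by (rule minus_carrier_mat)
  ultimately have XY: "X - Y = 0\<^sub>m n n" using nonsing unfolding lyap_nonsingular_def by blast
  show "X = Y"
  proof (rule eq_matI)
    fix i j assume "i < dim_row Y" "j < dim_col Y"
    moreover from this have "(X - Y) $$ (i,j) = 0" using XY Y by simp
    ultimately show "X $$ (i,j) = Y $$ (i,j)" using X Y by simp
  qed (use X Y in simp_all)
qed

text \<open>An injective linear map on the \<open>n\<^sup>2\<close>-dimensional space of matrices is onto: it maps the
  matrix units to \<open>n\<^sup>2\<close> independent matrices, which therefore span.\<close>

lemma lyap_op_surj: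
  assumes A: "A \<in> carrier_mat n n" and nonsing: "lyap_nonsingular n A" and V: "V \<in> carrier_mat n n"
  shows "\<exists>X\<in>carrier_mat n n. lyap_op A X = V"
proof -
  let ?E = "\<lambda>q. matrix_unit n (q div n) (q mod n) :: 'a mat"
  have E: "\<forall>q<n*n. ?E q \<in> carrier_mat n n" by simp
  have indep: "mat_lin_indep n (n*n) (\<lambda>q. lyap_op A (?E q))"
    unfolding mat_lin_indep_def
  proof (intro allI impI)
    fix c q assume "mat_lincomb n (n*n) c (\<lambda>q. lyap_op A (?E q)) = 0\<^sub>m n n" and q: "q < n*n"
    then have "lyap_op A (mat_lincomb n (n*n) c ?E) = 0\<^sub>m n n"
      by (simp add: lyap_op_mat_lincomb[OF A E])
    then have "mat_lincomb n (n*n) c ?E = 0\<^sub>m n n"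
      using nonsing unfolding lyap_nonsingular_def by simp
    then show "c q = 0" using q by (rule mat_lin_indepD[OF mat_lin_indep_matrix_units])
  qed
  have "\<forall>q<n*n. lyap_op A (?E q) \<in> carrier_mat n n" using A by (simp add: lyap_op_carrier_mat)
  moreover have "carrier_mat n n \<subseteq> mat_lin_span n (n*n) ?E" using mat_lin_span_matrix_units by blast
  ultimately have "carrier_mat n n \<subseteq> mat_lin_span n (n*n) (\<lambda>q. lyap_op A (?E q))"
    by (rule mat_lin_indep_spans[OF indep _ subset_refl])
  then obtain c where "V = mat_lincomb n (n*n) c (\<lambda>q. lyap_op A (?E q))"
    using V unfolding mat_lin_span_eq by blast
  then have "lyap_op A (mat_lincomb n (n*n) c ?E) = V" by (simp add: lyap_op_mat_lincomb[OF A E])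
  then show ?thesis using mat_lincomb_carrier_mat by blast
qed

lemma lyap_inv:
  assumes A: "A \<in> carrier_mat n n" and nonsing: "lyap_nonsingular n A" and V: "V \<in> carrier_mat n n"
  shows "lyap_inv n A V \<in> carrier_mat n n" and "lyap_op A (lyap_inv n A V) = V"
proof -
  obtain X where X: "X \<in> carrier_mat n n" "lyap_op A X = V" using lyap_op_surj[OF assms] by blast
  have "lyap_inv n A V = X"
    unfolding lyap_inv_def
  proof (rule the_equality)
    fix Y assume "Y \<in> carrier_mat n n \<and> lyap_op A Y = V"
    then show "Y = X" using inj_onD[OF lyap_op_inj[OF A nonsing], of Y X] X by simp
  qed (use X in simp)
  then show "lyap_inv n A V \<in> carrier_mat n n" and "lyap_op A (lyap_inv n A V) = V"
    using X by simp_all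
qed

lemma lyap_op_mult_left:
  assumes A: "A \<in> carrier_mat n n" and X: "X \<in> carrier_mat n n" and Z: "Z \<in> carrier_mat n n"
    and comm: "mat_adjoint A * Z = Z * mat_adjoint A"
  shows "lyap_op A (Z * X) = Z * lyap_op A X"
proof -
  have A': "mat_adjoint A \<in> carrier_mat n n" using A by simp
  have "mat_adjoint A * (Z * X) = Z * (mat_adjoint A * X)"
    using assoc_mult_mat[OF A' Z X] assoc_mult_mat[OF Z A' X] comm by simp
  moreover have "Z * X * A = Z * (X * A)" using assoc_mult_mat[OF Z X A] .
  moreover have "Z * (X * A) + Z * (mat_adjoint A * X) = Z * (X * A + mat_adjoint A * X)"
    using mult_add_distrib_mat[OF Z mult_carrier_mat[OF X A] mult_carrier_mat[OF A' X]] by simp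
  ultimately show ?thesis by (simp add: lyap_op_def)
qed

lemma lyap_AB_mult_commutant:
  assumes A: "A \<in> carrier_mat n n" and B: "B \<in> carrier_mat n n" and B_bicomm: "B \<in> bicomm n A"
    and nonsing: "lyap_nonsingular n A"
    and Z: "Z \<in> commutant n {mat_adjoint A}" and V: "V \<in> carrier_mat n n"
  shows "lyap_AB n A B (Z * V) = Z * lyap_AB n A B V"
proof -
  have Zc: "Z \<in> carrier_mat n n" and ZA: "Z * mat_adjoint A = mat_adjoint A * Z"
    using Z by (auto simp: commutant_def)
  have ZB: "mat_adjoint B * Z = Z * mat_adjoint B"
    using mat_adjoint_bicomm[OF A B_bicomm] Z by (auto simp: bicomm_def commutant_def)
  define X where "X = lyap_inv n A V"
  have X: "X \<in> carrier_mat n n" and LX: "lyap_op A X = V"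
    using lyap_inv[OF A nonsing V] by (simp_all add: X_def)
  have ZV: "Z * V \<in> carrier_mat n n" using Zc V by simp
  have "lyap_op A (lyap_inv n A (Z * V)) = lyap_op A (Z * X)"
    using lyap_inv(2)[OF A nonsing ZV] lyap_op_mult_left[OF A X Zc ZA[symmetric]] LX by simp
  then have "lyap_inv n A (Z * V) = Z * X"
    using inj_onD[OF lyap_op_inj[OF A nonsing]] lyap_inv(1)[OF A nonsing ZV] Zc X by simp
  then show ?thesis
    using lyap_op_mult_left[OF B X Zc ZB] by (simp add: lyap_AB_def X_def)
qed

lemma index_lyap_op_upper_triangular:
  assumes T: "T \<in> carrier_mat n n" "upper_triangular T" and Y: "Y \<in> carrier_mat n n"
    and i: "i < n" and j: "j < n"
    and lower: "\<And>i' j'. i' + j' < i + j \<Longrightarrow> i' < n \<Longrightarrow> j' < n \<Longrightarrow> Y $$ (i',j') = 0"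
  shows "lyap_op T Y $$ (i,j) = Y $$ (i,j) * (T $$ (j,j) + conjugate (T $$ (i,i)))"
proof -
  have T0: "T $$ (k,l) = 0" if "l < k" "k < n" for k l
    using T that unfolding upper_triangular_def by auto
  have "(\<Sum>k<n. Y $$ (i,k) * T $$ (k,j)) = Y $$ (i,j) * T $$ (j,j)"
  proof (rule sum_lessThan_single[OF j])
    fix k assume k: "k < n" "k \<noteq> j"
    show "Y $$ (i,k) * T $$ (k,j) = 0"
      using lower[of i k] T0[of j k] i k by (cases "k < j") auto
  qed
  moreover have "(\<Sum>k<n. conjugate (T $$ (k,i)) * Y $$ (k,j)) = conjugate (T $$ (i,i)) * Y $$ (i,j)"
  proof (rule sum_lessThan_single[OF i])
    fix k assume k: "k < n" "k \<noteq> i"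
    show "conjugate (T $$ (k,i)) * Y $$ (k,j) = 0"
      using lower[of k j] T0[of i k] j k by (cases "k < i") auto
  qed
  ultimately show ?thesis using index_lyap_op[OF T(1) Y i j] by (simp add: algebra_simps)
qed

lemma lyap_nonsingular_upper_triangular:
  assumes T: "T \<in> carrier_mat n n" "upper_triangular T"
    and diag: "\<forall>i<n. \<forall>j<n. T $$ (j,j) + conjugate (T $$ (i,i)) \<noteq> 0"
  shows "lyap_nonsingular n T"
  unfolding lyap_nonsingular_def
proof (intro ballI impI)
  fix Y assume Y: "Y \<in> carrier_mat n n" and LY: "lyap_op T Y = 0\<^sub>m n n"
  have "\<forall>i j. i + j = s \<longrightarrow> i < n \<longrightarrow> j < n \<longrightarrow> Y $$ (i,j) = 0" for s
  proof (induction s rule: less_induct)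
    case (less s)
    show ?case
    proof (intro allI impI)
      fix i j assume s: "i + j = s" and i: "i < n" and j: "j < n"
      have "Y $$ (i,j) * (T $$ (j,j) + conjugate (T $$ (i,i))) = 0"
        using index_lyap_op_upper_triangular[OF T Y i j] less s LY i j by simp
      then show "Y $$ (i,j) = 0" using diag i j by simp
    qed
  qed
  then show "Y = 0\<^sub>m n n" using Y by (intro eq_matI) auto
qed

lemma lyap_op_congruence:
  assumes A: "A \<in> carrier_mat n n" and T: "T \<in> carrier_mat n n" and P: "P \<in> carrier_mat n n"
    and X: "X \<in> carrier_mat n n" and AP: "A * P = P * T"
  shows "lyap_op T (mat_adjoint P * X * P) = mat_adjoint P * lyap_op A X * P"
proof -
  have A': "mat_adjoint A \<in> carrier_mat n n" and P': "mat_adjoint P \<in> carrier_mat n n"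
    and T': "mat_adjoint T \<in> carrier_mat n n" using A P T by simp_all
  have TP: "mat_adjoint T * mat_adjoint P = mat_adjoint P * mat_adjoint A"
    using mat_adjoint_mult[OF P T] mat_adjoint_mult[OF A P] AP by simp
  have "mat_adjoint P * X * P * T = mat_adjoint P * (X * A) * P"
    using A P P' T X AP by (simp add: assoc_mult_mat[of _ n n _ n _ n])
  moreover have "mat_adjoint T * (mat_adjoint P * X * P) = mat_adjoint P * (mat_adjoint A * X) * P"
  proof -
    have "mat_adjoint T * (mat_adjoint P * X * P) = mat_adjoint T * (mat_adjoint P * X) * P"
      by (rule assoc_mult_mat[OF T' mult_carrier_mat[OF P' X] P, symmetric])
    also have "\<dots> = mat_adjoint T * mat_adjoint P * X * P"
      using assoc_mult_mat[OF T' P' X] by simp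
    also have "\<dots> = mat_adjoint P * (mat_adjoint A * X) * P"
      unfolding TP using assoc_mult_mat[OF P' A' X] by simp
    finally show ?thesis .
  qed
  moreover have "mat_adjoint P * (X * A + mat_adjoint A * X) * P =
      mat_adjoint P * (X * A) * P + mat_adjoint P * (mat_adjoint A * X) * P"
  proof -
    have XA: "X * A \<in> carrier_mat n n" and AX: "mat_adjoint A * X \<in> carrier_mat n n"
      using X A A' by auto
    show ?thesis
      unfolding mult_add_distrib_mat[OF P' XA AX]
      using add_mult_distrib_mat[OF mult_carrier_mat[OF P' XA] mult_carrier_mat[OF P' AX] P] .
  qed
  ultimately show ?thesis by (simp add: lyap_op_def)
qed

lemma eigenvalue_upper_triangular_similar:
  fixes A T :: "'a :: field mat"
  assumes A: "A \<in> carrier_mat n n" and T: "T \<in> carrier_mat n n" "upper_triangular T"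
    and sim: "similar_mat A T" and i: "i < n"
  shows "eigenvalue A (T $$ (i,i))"
proof -
  have "char_poly A = (\<Prod>a\<leftarrow>diag_mat T. [:- a, 1:])"
    using char_poly_similar[OF sim] char_poly_upper_triangular[OF T] by simp
  moreover have "T $$ (i,i) \<in> set (diag_mat T)" using i T by (auto simp: diag_mat_def)
  ultimately have "poly (char_poly A) (T $$ (i,i)) = 0"
    by (simp add: poly_prod_list prod_list_zero_iff o_def)
  then show ?thesis using eigenvalue_root_char_poly[OF A] by simp
qed

text \<open>By Schur, \<open>A P = P T\<close> with \<open>T\<close> upper triangular and \<open>P\<close> invertible. The congruence
  \<open>X \<mapsto> P\<^sup>* X P\<close> maps the kernel of \<open>L\<^sub>A\<close> into that of \<open>L\<^sub>T\<close>, which is trivial because the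
  diagonal entries of \<open>T\<close> are eigenvalues of \<open>A\<close>.\<close>

lemma lyap_nonsingular_complex:
  fixes A :: "complex mat"
  assumes A: "A \<in> carrier_mat n n"
    and ev: "\<forall>la mu. eigenvalue A la \<longrightarrow> eigenvalue A mu \<longrightarrow> la + cnj mu \<noteq> 0"
  shows "lyap_nonsingular n A"
proof -
  obtain es where "char_poly A = (\<Prod>a\<leftarrow>es. [:- a, 1:])" using char_poly_factorized[OF A] by blast
  then obtain T where T: "T \<in> carrier_mat n n" "upper_triangular T" "similar_mat A T"
    using schur_decomposition_exists[OF A] by blast
  obtain P Q where P: "P \<in> carrier_mat n n" and Q: "Q \<in> carrier_mat n n"
    and PQ: "P * Q = 1\<^sub>m n" "Q * P = 1\<^sub>m n" and APTQ: "A = P * T * Q"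
  proof -
    obtain n' P Q where "{A, T, P, Q} \<subseteq> carrier_mat n' n'"
      and "P * Q = 1\<^sub>m n'" "Q * P = 1\<^sub>m n'" "A = P * T * Q"
      using similar_matD[OF T(3)] by blast
    moreover from this have "n' = n" using A by auto
    ultimately show ?thesis using that by auto
  qed
  have AP: "A * P = P * T"
    using APTQ PQ(2) P Q T(1) by (simp add: assoc_mult_mat[of _ n n _ n _ n])
  have "lyap_nonsingular n T"
    using ev eigenvalue_upper_triangular_similar[OF A T]
    by (intro lyap_nonsingular_upper_triangular[OF T(1,2)]) simp
  show ?thesis
    unfolding lyap_nonsingular_def
  proof (intro ballI impI)
    fix X assume X: "X \<in> carrier_mat n n" and LX: "lyap_op A X = 0\<^sub>m n n"
    have "lyap_op T (mat_adjoint P * X * P) = 0\<^sub>m n n"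
      using lyap_op_congruence[OF A T(1) P X AP] LX P by simp
    moreover have "mat_adjoint P * X * P \<in> carrier_mat n n"
      using mult_carrier_mat[OF mult_carrier_mat[OF mat_adjoint_carrier_mat[OF P] X] P] .
    ultimately have PXP: "mat_adjoint P * X * P = 0\<^sub>m n n"
      using \<open>lyap_nonsingular n T\<close> unfolding lyap_nonsingular_def by blast
    have QP: "mat_adjoint Q * mat_adjoint P = 1\<^sub>m n" using mat_adjoint_mult[OF P Q] PQ(1) by simp
    have "X = (mat_adjoint Q * mat_adjoint P) * X * (P * Q)" using QP PQ(1) X by simp
    also have "\<dots> = mat_adjoint Q * (mat_adjoint P * X * P) * Q"
      using P Q X by (simp add: assoc_mult_mat[of _ n n _ n _ n])
    also have "\<dots> = 0\<^sub>m n n" using PXP Q by simp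
    finally show "X = 0\<^sub>m n n" .
  qed
qed

lemma lyap_nonsingular_real:
  fixes A :: "real mat"
  assumes A: "A \<in> carrier_mat n n"
    and ev: "\<forall>la mu. eigenvalue (map_mat complex_of_real A) la \<longrightarrow>
      eigenvalue (map_mat complex_of_real A) mu \<longrightarrow> la + cnj mu \<noteq> 0"
  shows "lyap_nonsingular n A"
  unfolding lyap_nonsingular_def
proof (intro ballI impI)
  fix X :: "real mat" assume X: "X \<in> carrier_mat n n" and LX: "lyap_op A X = 0\<^sub>m n n"
  let ?c = "map_mat complex_of_real"
  have Ac: "?c A \<in> carrier_mat n n" and Xc: "?c X \<in> carrier_mat n n" using A X by auto
  have "lyap_op (?c A) (?c X) = ?c (lyap_op A X)"
  proof (rule eq_matI)
    fix i j assume "i < dim_row (?c (lyap_op A X))" "j < dim_col (?c (lyap_op A X))"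
    then have i: "i < n" and j: "j < n" using lyap_op_carrier_mat[OF A X] by auto
    show "lyap_op (?c A) (?c X) $$ (i,j) = ?c (lyap_op A X) $$ (i,j)"
      using index_lyap_op[OF Ac Xc i j] index_lyap_op[OF A X i j] lyap_op_carrier_mat[OF A X]
        A X i j
      by simp
  qed (use lyap_op_carrier_mat[OF A X] lyap_op_carrier_mat[OF Ac Xc] in simp_all)
  also have "\<dots> = 0\<^sub>m n n" using LX by (intro eq_matI) auto
  finally have "?c X = 0\<^sub>m n n"
    using lyap_nonsingular_complex[OF Ac ev] Xc unfolding lyap_nonsingular_def by blast
  also have "\<dots> = ?c (0\<^sub>m n n)" by (intro eq_matI) auto
  finally show "X = 0\<^sub>m n n" by (rule of_real_hom.mat_hom_inj)
qed

lemma lyap_regular_real_nonsingular: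
  fixes A :: "real mat"
  assumes "lyap_regular complex_of_real n A"
  shows "lyap_nonsingular n A"
  using assms unfolding lyap_regular_def by (blast intro: lyap_nonsingular_real)

lemma lyap_regular_complex_nonsingular:
  fixes A :: "complex mat"
  assumes "lyap_regular (\<lambda>z. z) n A"
  shows "lyap_nonsingular n A"
proof -
  have "map_mat (\<lambda>z. z) A = A" by (rule eq_matI) simp_all
  then show ?thesis using assms unfolding lyap_regular_def by (simp add: lyap_nonsingular_complex)
qed

section \<open>The kernel inclusion\<close>

lemma min_hill_rep_spans_bicomm:
  fixes A B P H :: "'a :: conjugatable_ordered_field mat"
  assumes A: "A \<in> carrier_mat n n" and B: "B \<in> carrier_mat n n" and B_bicomm: "B \<in> bicomm n A"
    and nonsing: "lyap_nonsingular n A"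
    and min: "min_hill_rep n (lyap_AB n A B) m C H"
    and P: "P \<in> carrier_mat m m" "invertible_mat P" and H: "H = mat_adjoint P * P"
    and dim: "m = mat_subspace_dim n (bicomm n A)"
  shows "(\<forall>k<m. C k \<in> bicomm n (mat_adjoint A)) \<and> bicomm n (mat_adjoint A) \<subseteq> span_C_I n m C"
proof -
  have C: "\<forall>k<m. C k \<in> carrier_mat n n" using min by (auto simp: min_hill_rep_def hill_rep_def)
  obtain Q where Q: "Q \<in> carrier_mat m m" "Q * P = 1\<^sub>m m" "P * Q = 1\<^sub>m m"
    using invertible_matE[OF P] by blast
  have Q': "mat_adjoint Q \<in> carrier_mat m m" using Q(1) by simp
  have "P * (Q * mat_adjoint Q) = mat_adjoint Q"
    using assoc_mult_mat[OF P(1) Q(1) Q', symmetric] Q(3) Q' by simp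
  then have "H * (Q * mat_adjoint Q) = mat_adjoint P * mat_adjoint Q"
    using assoc_mult_mat[OF mat_adjoint_carrier_mat[OF P(1)] P(1) mult_carrier_mat[OF Q(1) Q']] H
    by simp
  also have "\<dots> = 1\<^sub>m m" using mat_adjoint_mult[OF Q(1) P(1)] Q(2) by simp
  finally have HK: "H * (Q * mat_adjoint Q) = 1\<^sub>m m" .
  have commute: "\<forall>Z\<in>commutant n {mat_adjoint A}. \<forall>V\<in>carrier_mat n n.
      lyap_AB n A B (Z * V) = Z * lyap_AB n A B V"
    using lyap_AB_mult_commutant[OF A B B_bicomm nonsing] by blast
  have "Q * mat_adjoint Q \<in> carrier_mat m m" using Q(1) Q' by simp
  then have C_bicomm: "\<forall>k<m. C k \<in> bicomm n (mat_adjoint A)"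
    using min_hill_rep_bicomm[OF min _ HK commute] by blast
  obtain D where D: "\<forall>k<m. D k \<in> bicomm n A" "bicomm n A \<subseteq> mat_lin_span n m D"
    using mat_subspace_dim_spanning_family[OF bicomm_carrier_mat] dim by blast
  have "bicomm n (mat_adjoint A) \<subseteq> mat_lin_span n m (\<lambda>k. mat_adjoint (D k))"
  proof
    fix Y assume "Y \<in> bicomm n (mat_adjoint A)"
    then have "mat_adjoint Y \<in> bicomm n A"
      using mat_adjoint_bicomm[of "mat_adjoint A" n Y] A by simp
    then show "Y \<in> mat_lin_span n m (\<lambda>k. mat_adjoint (D k))"
      using D bicomm_carrier_mat[of n A] by (intro mat_adjoint_mat_lin_span) auto
  qed
  then have "bicomm n (mat_adjoint A) \<subseteq> mat_lin_span n m C"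
    by (rule mat_lin_indep_spans[OF min_hill_rep_lin_indep[OF min] C_bicomm bicomm_carrier_mat])
  then show ?thesis using C_bicomm mat_lin_span_subset_span_C_I[OF C] by blast
qed

lemma mat_kernel_L_Rs_subset_M_Rs_min_hill_rep:
  fixes A B P H :: "'a :: conjugatable_ordered_field mat"
  assumes A: "A \<in> carrier_mat n n" and B: "B \<in> carrier_mat n n" and B_bicomm: "B \<in> bicomm n A"
    and nonsing: "lyap_nonsingular n A"
    and min: "min_hill_rep n (lyap_AB n A B) m C H"
    and P: "P \<in> carrier_mat m m" "invertible_mat P" and H: "H = mat_adjoint P * P"
    and span_or_dim:
      "span_C_I n m C = bicomm n (mat_adjoint A) \<or> m = mat_subspace_dim n (bicomm n A)"
    and Rs: "set Rs \<subseteq> carrier_mat n n"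
  shows "mat_kernel (L_Rs n m C P Rs) \<subseteq> mat_kernel (M_Rs n m C P A B Rs)"
proof -
  have C: "\<forall>k<m. C k \<in> carrier_mat n n" using min by (auto simp: min_hill_rep_def hill_rep_def)
  have "(\<forall>k<m. C k \<in> bicomm n (mat_adjoint A)) \<and> bicomm n (mat_adjoint A) \<subseteq> span_C_I n m C"
  proof (cases "span_C_I n m C = bicomm n (mat_adjoint A)")
    case True
    then show ?thesis using span_C_I_generator C by blast
  next
    case False
    then show ?thesis
      using span_or_dim min_hill_rep_spans_bicomm[OF A B B_bicomm nonsing min P H] by blast
  qed
  then show ?thesis using mat_kernel_L_Rs_subset_M_Rs_bicomm[OF A B B_bicomm C P Rs] by blast
qed

theorem lemma6p4:
  shows
  "(\<forall>n (A :: real mat) B m C H P.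
      A \<in> carrier_mat n n \<and> B \<in> carrier_mat n n \<and>
      lyap_regular complex_of_real n A \<and>
      B \<in> CL n A \<inter> bicomm n A \<and>
      min_hill_rep n (lyap_AB n A B) m C H \<and>
      P \<in> carrier_mat m m \<and> invertible_mat P \<and> H = mat_adjoint P * P \<and>
      (span_C_I n m C = bicomm n (mat_adjoint A) \<or> m = mat_subspace_dim n (bicomm n A))
      \<longrightarrow> (\<forall>Rs. set Rs \<subseteq> carrier_mat n n \<longrightarrow>
             mat_kernel (L_Rs n m C P Rs) \<subseteq> mat_kernel (M_Rs n m C P A B Rs)))
   \<and>
   (\<forall>n (A :: complex mat) B m C H P.
      A \<in> carrier_mat n n \<and> B \<in> carrier_mat n n \<and>
      lyap_regular (\<lambda>z. z) n A \<and>
      B \<in> CL n A \<inter> bicomm n A \<and>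
      min_hill_rep n (lyap_AB n A B) m C H \<and>
      P \<in> carrier_mat m m \<and> invertible_mat P \<and> H = mat_adjoint P * P \<and>
      (span_C_I n m C = bicomm n (mat_adjoint A) \<or> m = mat_subspace_dim n (bicomm n A))
      \<longrightarrow> (\<forall>Rs. set Rs \<subseteq> carrier_mat n n \<longrightarrow>
             mat_kernel (L_Rs n m C P Rs) \<subseteq> mat_kernel (M_Rs n m C P A B Rs)))"
  by (intro conjI allI impI; elim conjE IntE; rule mat_kernel_L_Rs_subset_M_Rs_min_hill_rep;
      (assumption |
       rule lyap_regular_real_nonsingular lyap_regular_complex_nonsingular, assumption))

end
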